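(* Suppose Assumption I holds. Then there exists $\gamma>0$ such that $\langle\Im\mathcal T(\mathbf f,\mathbf g),(\mathbf f,\mathbf g)\rangle\ge\gamma\|(\mathbf f,\mathbf g)\|^2$ for all $(\mathbf f,\mathbf g)\in\mathrm{Range}(\mathcal H)\subset X$, where $\Im\mathcal T=(\mathcal T-\mathcal T^* )/(2i)$.
   Context: Let $k>0$ be fixed and let $\Omega\subset\mathbb{R}^3$ be a bounded Lipschitz domain with $\mathbb{R}^3\setminus\overline\Omega$ connected. Let $\varepsilon_r,\mu_r,\xi,\zeta:\mathbb{R}^3\to\mathbb{C}^{3\times3}$ with $\varepsilon_r=\mu_r=I_3$ and $\xi=\zeta=0$ in $\mathbb{R}^3\setminus\overline\Omega$; $\mu_r^{-1}$ denotes the pointwise matrix inverse of $\mu_r$. Set $P=\varepsilon_r-I_3$, $Q=I_3-\mu_r^{-1}$ (both supported in $\Omega$). $|\cdot|_F$ is the Frobenius norm. Assumption I: $\varepsilon_r,\mu_r,\mu_r^{-1},\xi,\zeta\in[L^\infty(\Omega)]^{3\times3}$ are symmetric (i.e. equal to their transposes) a.e., and there are constants $c_1,c_2,\alpha,\beta>0$ such that for all $a\in\mathbb{C}^3$, a.e. in $\Omega$: $\Re(\mu_r^{-1}a\cdot\overline a)\ge c_1|a|^2$, $\Re((\varepsilon_r-\xi\mu_r^{-1}\zeta)a\cdot\overline a)\ge c_2|a|^2$, $-\Im(\mu_r^{-1}a\cdot\overline a)\ge\alpha|a|^2$, $\Im((\varepsilon_r-\xi\mu_r^{-1}\zeta)a\cdot\overline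 a)\ge\beta|a|^2$, and $\||\mu_r^{-1}\xi|_F\|_{L^\infty}^2+\||\mu_r^{-1}\zeta|_F\|_{L^\infty}^2<2\min\{c_1c_2,\alpha\beta\}$. $H(\mathrm{curl},D)=\{\mathbf v\in[L^2(D)]^3:\mathrm{curl}\,\mathbf v\in[L^2(D)]^3\}$ with the graph inner product, and $H_{loc}(\mathrm{curl},\mathbb{R}^3)$ the fields whose restriction to every ball $B$ lies in $H(\mathrm{curl},B)$. Let $X=[L^2(\Omega)]^3\times[L^2(\Omega)]^3$ with inner product $\langle\cdot,\cdot\rangle$ and norm $\|\cdot\|$. Let $\mathbb S^2$ be the unit sphere and $\mathbf L^2_t(\mathbb S^2)=\{\mathbf v\in[L^2(\mathbb S^2)]^3:\hat{\mathbf x}\cdot\mathbf v(\hat{\mathbf x})=0\}$. Direct problem: for $(\mathbf f,\mathbf g)\in X$, $\mathbf u=\mathbf u[\mathbf f,\mathbf g]\in H_{loc}(\mathrm{curl},\mathbb{R}^3)$ is the solution of $\int_{\mathbb{R}^3}(\mathrm{curl}\,\mathbf u\cdot\mathrm{curl}\,\overline{\mathbf v}-k^2\mathbf u\cdot\overline{\mathbf v})\,dx=\int_\Omega[k^2(P-\xi\mu_r^{-1}\zeta)(\mathbf u+\mathbf f)-ik\xi\mu_r^{-1}(\mathrm{curl}\,\mathbf u+\mathbf g)]\cdot\overline{\mathbf v}+[ik\mu_r^{-1}\zeta(\mathbf u+\mathbf f)+Q(\mathrm{curl}\,\mathbf u+\mathbf g)]\cdot\mathrm{curl}\,\overline{\mathbf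 v}\,dx$ for all compactly supported $\mathbf v\in H(\mathrm{curl},\mathbb{R}^3)$, together with the Silver–Müller radiation condition $\mathrm{curl}\,\mathbf u\times\frac{x}{|x|}-ik\mathbf u=O(|x|^{-2})$ as $|x|\to\infty$ uniformly in $x/|x|$. It is known (and may be used) that under Assumption I this problem is uniquely solvable, $\|\mathbf u\|_{H(\mathrm{curl},\Omega)}\le c\|(\mathbf f,\mathbf g)\|$, and moreover $\|\mathbf u\|_{H(\mathrm{curl},\Omega)}\le C_1\|\mathbf f+\mathbf u\|+C_2\|\mathbf g+\mathrm{curl}\,\mathbf u\|$ for constants $C_1,C_2>0$. The far-field pattern $\mathbf u^\infty$ of $\mathbf u$ is defined by $\mathbf u(x)=\frac{e^{ik|x|}}{|x|}\big(\mathbf u^\infty(\hat x)+O(|x|^{-1})\big)$, $\hat x=x/|x|$. Herglotz operator $\mathcal H:\mathbf L^2_t(\mathbb S^2)\to X$, $\mathcal H\mathbf g=(\mathcal H_1\mathbf g,\mathrm{curl}\,\mathcal H_1\mathbf g)$ where $(\mathcal H_1\mathbf g)(\mathbf x)=\int_{\mathbb S^2}\mathbf g(\mathbf d)e^{ik\mathbf x\cdot\mathbf d}ds(\mathbf d)$, $\mathbf x\in\Omega$. Middle operator $\mathcal T=(\mathcal T_1,\mathcal T_2):X\to X$ (bounded and linear under Assumption I), $\mathcal T_1(\mathbf f,\mathbf g)=k^2(P-\xi\mu_r^{-1}\zeta)(\mathbf u+\mathbf f)-ik\xi\mu_r^{-1}(\mathrm{curl}\,\mathbf u+\mathbf g)$,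 $\mathcal T_2(\mathbf f,\mathbf g)=ik\mu_r^{-1}\zeta(\mathbf u+\mathbf f)+Q(\mathrm{curl}\,\mathbf u+\mathbf g)$ on $\Omega$, with $\mathbf u=\mathbf u[\mathbf f,\mathbf g]$. *)

theory Defs
  imports "HOL-Analysis.Analysis"
begin

type_synonym R3 = "real^3"
type_synonym C3 = "complex^3"
type_synonym M3 = "complex^3^3"

text \<open>bilinear dot product a . b (no conjugation)\<close>
definition cdot :: "C3 \<Rightarrow> C3 \<Rightarrow> complex" where
  "cdot a b = (\<Sum>i\<in>UNIV. a$i * b$i)"

definition vcnj :: "C3 \<Rightarrow> C3" where
  "vcnj a = (\<chi> i. cnj (a$i))"

definition cvec :: "R3 \<Rightarrow> C3" where
  "cvec x = (\<chi> i. complex_of_real (x$i))"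

definition ccross :: "C3 \<Rightarrow> C3 \<Rightarrow> C3" where
  "ccross a b = vector [a$2 * b$3 - a$3 * b$2, a$3 * b$1 - a$1 * b$3, a$1 * b$2 - a$2 * b$1]"

definition frob :: "M3 \<Rightarrow> real" where
  "frob A = sqrt (\<Sum>i\<in>UNIV. \<Sum>j\<in>UNIV. (cmod (A$i$j))^2)"

definition symmetric_mat :: "M3 \<Rightarrow> bool" where
  "symmetric_mat A \<longleftrightarrow> transpose A = A"

definition pd :: "(R3 \<Rightarrow> C3) \<Rightarrow> 3 \<Rightarrow> R3 \<Rightarrow> C3" where
  "pd F j x = frechet_derivative F (at x) (axis j 1)"

definition ccurl :: "(R3 \<Rightarrow> C3) \<Rightarrow> R3 \<Rightarrow> C3" where
  "ccurl F x = vector [ pd F 2 x $ 3 - pd F 3 x $ 2,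
                        pd F 3 x $ 1 - pd F 1 x $ 3,
                        pd F 1 x $ 2 - pd F 2 x $ 1 ]"

definition lipschitz_domain :: "R3 set \<Rightarrow> bool" where
  "lipschitz_domain \<Omega> \<longleftrightarrow> open \<Omega> \<and> connected \<Omega> \<and> \<Omega> \<noteq> {} \<and>
     (\<forall>p\<in>frontier \<Omega>. \<exists>r>0. \<exists>R::R3\<Rightarrow>R3. \<exists>\<phi>::real\<times>real\<Rightarrow>real. \<exists>L.
        orthogonal_transformation R \<and> L-lipschitz_on UNIV \<phi> \<and>
        (\<forall>x\<in>ball p r. x \<in> \<Omega> \<longleftrightarrow> (R (x - p))$3 < \<phi> ((R (x - p))$1, (R (x - p))$2)))"

definition L2on :: "R3 set \<Rightarrow> (R3 \<Rightarrow> C3) \<Rightarrow> bool" where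
  "L2on D f \<longleftrightarrow> (\<lambda>x. indicator D x *\<^sub>R f x) \<in> borel_measurable lebesgue \<and>
      (\<integral>\<^sup>+ x. ennreal (indicator D x * (norm (f x))^2) \<partial>lebesgue) < \<infinity>"

definition L2loc :: "(R3 \<Rightarrow> C3) \<Rightarrow> bool" where
  "L2loc f \<longleftrightarrow> (\<forall>r. L2on (ball 0 r) f)"

definition ip :: "R3 set \<Rightarrow> (R3 \<Rightarrow> C3) \<Rightarrow> (R3 \<Rightarrow> C3) \<Rightarrow> complex" where
  "ip D F G = (LINT x:D|lebesgue. cdot (F x) (vcnj (G x)))"

definition ipX :: "R3 set \<Rightarrow> (R3 \<Rightarrow> C3) \<times> (R3 \<Rightarrow> C3) \<Rightarrow> (R3 \<Rightarrow> C3) \<times> (R3 \<Rightarrow> C3) \<Rightarrow> complex" where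
  "ipX D FF GG = ip D (fst FF) (fst GG) + ip D (snd FF) (snd GG)"

definition L2norm :: "R3 set \<Rightarrow> (R3 \<Rightarrow> C3) \<Rightarrow> real" where
  "L2norm D f = sqrt (LINT x:D|lebesgue. (norm (f x))^2)"

text \<open>norm of X; also the H(curl,D) norm of u when the second component is curl u\<close>
definition normX :: "R3 set \<Rightarrow> (R3 \<Rightarrow> C3) \<Rightarrow> (R3 \<Rightarrow> C3) \<Rightarrow> real" where
  "normX D f g = sqrt (LINT x:D|lebesgue. (norm (f x))^2 + (norm (g x))^2)"

definition test_fun :: "(R3 \<Rightarrow> C3) \<Rightarrow> bool" where
  "test_fun \<phi> \<longleftrightarrow> (\<forall>x. \<phi> differentiable (at x)) \<and> (\<forall>j. continuous_on UNIV (pd \<phi> j)) \<and>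
     bounded {x. \<phi> x \<noteq> 0}"

definition Hloc_curl :: "(R3 \<Rightarrow> C3) \<Rightarrow> (R3 \<Rightarrow> C3) \<Rightarrow> bool" where
  "Hloc_curl u w \<longleftrightarrow> L2loc u \<and> L2loc w \<and>
     (\<forall>\<phi>. test_fun \<phi> \<longrightarrow>
        (\<integral>x. cdot (u x) (ccurl \<phi> x) \<partial>lebesgue) = (\<integral>x. cdot (w x) (\<phi> x) \<partial>lebesgue))"

definition Hcurl_cs :: "(R3 \<Rightarrow> C3) \<Rightarrow> (R3 \<Rightarrow> C3) \<Rightarrow> bool" where
  "Hcurl_cs v cv \<longleftrightarrow> Hloc_curl v cv \<and> L2on UNIV v \<and> L2on UNIV cv \<and>
     (\<exists>R. AE x in lebesgue. R < norm x \<longrightarrow> v x = 0)"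

definition Pm :: "(R3 \<Rightarrow> M3) \<Rightarrow> R3 \<Rightarrow> M3" where
  "Pm eps x = eps x - mat 1"

definition Qm :: "(R3 \<Rightarrow> M3) \<Rightarrow> R3 \<Rightarrow> M3" where
  "Qm mu x = mat 1 - matrix_inv (mu x)"

text \<open>T_1(f,g) (pointwise), with u = u[f,g] and w = curl u\<close>
definition T1 :: "real \<Rightarrow> (R3 \<Rightarrow> M3) \<Rightarrow> (R3 \<Rightarrow> M3) \<Rightarrow> (R3 \<Rightarrow> M3) \<Rightarrow> (R3 \<Rightarrow> M3) \<Rightarrow>
    (R3 \<Rightarrow> C3) \<Rightarrow> (R3 \<Rightarrow> C3) \<Rightarrow> (R3 \<Rightarrow> C3) \<Rightarrow> (R3 \<Rightarrow> C3) \<Rightarrow> R3 \<Rightarrow> C3" where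
  "T1 k eps mu xi zeta f g u w x =
     complex_of_real (k^2) *s ((Pm eps x - xi x ** matrix_inv (mu x) ** zeta x) *v (u x + f x))
     - (\<i> * complex_of_real k) *s ((xi x ** matrix_inv (mu x)) *v (w x + g x))"

definition T2 :: "real \<Rightarrow> (R3 \<Rightarrow> M3) \<Rightarrow> (R3 \<Rightarrow> M3) \<Rightarrow> (R3 \<Rightarrow> M3) \<Rightarrow> (R3 \<Rightarrow> M3) \<Rightarrow>
    (R3 \<Rightarrow> C3) \<Rightarrow> (R3 \<Rightarrow> C3) \<Rightarrow> (R3 \<Rightarrow> C3) \<Rightarrow> (R3 \<Rightarrow> C3) \<Rightarrow> R3 \<Rightarrow> C3" where
  "T2 k eps mu xi zeta f g u w x =
     (\<i> * complex_of_real k) *s ((matrix_inv (mu x) ** zeta x) *v (u x + f x))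
     + Qm mu x *v (w x + g x)"

definition silver_mueller :: "real \<Rightarrow> (R3 \<Rightarrow> C3) \<Rightarrow> (R3 \<Rightarrow> C3) \<Rightarrow> bool" where
  "silver_mueller k u w \<longleftrightarrow> (\<exists>R C. AE x in lebesgue. R \<le> norm x \<longrightarrow>
      norm (ccross (w x) (cvec (x /\<^sub>R norm x)) - (\<i> * complex_of_real k) *s u x) \<le> C / (norm x)^2)"

definition solves :: "real \<Rightarrow> R3 set \<Rightarrow> (R3 \<Rightarrow> M3) \<Rightarrow> (R3 \<Rightarrow> M3) \<Rightarrow> (R3 \<Rightarrow> M3) \<Rightarrow> (R3 \<Rightarrow> M3) \<Rightarrow>
    (R3 \<Rightarrow> C3) \<Rightarrow> (R3 \<Rightarrow> C3) \<Rightarrow> (R3 \<Rightarrow> C3) \<Rightarrow> (R3 \<Rightarrow> C3) \<Rightarrow> bool" where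
  "solves k \<Omega> eps mu xi zeta f g u w \<longleftrightarrow> Hloc_curl u w \<and>
     (\<forall>v cv. Hcurl_cs v cv \<longrightarrow>
        (\<integral>x. cdot (w x) (vcnj (cv x)) - complex_of_real (k^2) * cdot (u x) (vcnj (v x)) \<partial>lebesgue)
        = (LINT x:\<Omega>|lebesgue. cdot (T1 k eps mu xi zeta f g u w x) (vcnj (v x))
                             + cdot (T2 k eps mu xi zeta f g u w x) (vcnj (cv x)))) \<and>
     silver_mueller k u w"

definition Linf_on :: "R3 set \<Rightarrow> (R3 \<Rightarrow> M3) \<Rightarrow> bool" where
  "Linf_on D A \<longleftrightarrow> (\<lambda>x. indicator D x *\<^sub>R A x) \<in> borel_measurable lebesgue \<and>
     (\<exists>B. AE x in lebesgue. x \<in> D \<longrightarrow> norm (A x) \<le> B)"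

definition assumption_I :: "R3 set \<Rightarrow> (R3 \<Rightarrow> M3) \<Rightarrow> (R3 \<Rightarrow> M3) \<Rightarrow> (R3 \<Rightarrow> M3) \<Rightarrow> (R3 \<Rightarrow> M3) \<Rightarrow> bool" where
  "assumption_I \<Omega> eps mu xi zeta \<longleftrightarrow>
     (AE x in lebesgue. x \<in> \<Omega> \<longrightarrow> invertible (mu x)) \<and>
     Linf_on \<Omega> eps \<and> Linf_on \<Omega> mu \<and> Linf_on \<Omega> (\<lambda>x. matrix_inv (mu x)) \<and>
     Linf_on \<Omega> xi \<and> Linf_on \<Omega> zeta \<and>
     (AE x in lebesgue. x \<in> \<Omega> \<longrightarrow> symmetric_mat (eps x) \<and> symmetric_mat (mu x) \<and>
        symmetric_mat (matrix_inv (mu x)) \<and> symmetric_mat (xi x) \<and> symmetric_mat (zeta x)) \<and>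
     (\<exists>c1 c2 \<alpha> \<beta>. c1 > 0 \<and> c2 > 0 \<and> \<alpha> > 0 \<and> \<beta> > 0 \<and>
        (AE x in lebesgue. x \<in> \<Omega> \<longrightarrow> (\<forall>a::C3.
           Re (cdot (matrix_inv (mu x) *v a) (vcnj a)) \<ge> c1 * (norm a)^2 \<and>
           Re (cdot ((eps x - xi x ** matrix_inv (mu x) ** zeta x) *v a) (vcnj a)) \<ge> c2 * (norm a)^2 \<and>
           - Im (cdot (matrix_inv (mu x) *v a) (vcnj a)) \<ge> \<alpha> * (norm a)^2 \<and>
           Im (cdot ((eps x - xi x ** matrix_inv (mu x) ** zeta x) *v a) (vcnj a)) \<ge> \<beta> * (norm a)^2)) \<and>
        (\<exists>s t. s^2 + t^2 < 2 * min (c1 * c2) (\<alpha> * \<beta>) \<and>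
           (AE x in lebesgue. x \<in> \<Omega> \<longrightarrow>
              frob (matrix_inv (mu x) ** xi x) \<le> s \<and> frob (matrix_inv (mu x) ** zeta x) \<le> t)))"

text \<open>spherical parametrisation of S^2; surface measure ds = sin theta dtheta dphi\<close>
definition sdir :: "real \<Rightarrow> real \<Rightarrow> R3" where
  "sdir \<theta> \<phi> = vector [sin \<theta> * cos \<phi>, sin \<theta> * sin \<phi>, cos \<theta>]"

definition sph_param :: "(real \<times> real) set" where
  "sph_param = {0..pi} \<times> {0..2*pi}"

definition L2t :: "(R3 \<Rightarrow> C3) \<Rightarrow> bool" where
  "L2t h \<longleftrightarrow>
     (\<lambda>p. indicator sph_param p *\<^sub>R h (sdir (fst p) (snd p))) \<in> borel_measurable lebesgue \<and>
     (\<integral>\<^sup>+ p. ennreal (indicator sph_param p * sin (fst p) * (norm (h (sdir (fst p) (snd p))))^2) \<partial>lebesgue) < \<infinity> \<and>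
     (AE p in lebesgue. p \<in> sph_param \<longrightarrow> cdot (cvec (sdir (fst p) (snd p))) (h (sdir (fst p) (snd p))) = 0)"

definition herglotz1 :: "real \<Rightarrow> (R3 \<Rightarrow> C3) \<Rightarrow> R3 \<Rightarrow> C3" where
  "herglotz1 k h x = (\<integral>p. (indicator sph_param p * sin (fst p)) *\<^sub>R
       (exp (\<i> * complex_of_real (k * (x \<bullet> sdir (fst p) (snd p)))) *s h (sdir (fst p) (snd p))) \<partial>lebesgue)"

end

theory Submission
  imports Defs "HOL-Probability.Characteristic_Functions"
begin

text \<open>Write \<open>a = u + f\<close> and \<open>b = curl u + g\<close> for the total fields. Pointwise, Assumption I gives
  \<open>Im (T\<^sub>1 \<cdot> conj a + T\<^sub>2 \<cdot> conj b) \<ge> \<lambda> (|a|\<^sup>2 + |b|\<^sup>2)\<close>: the diagonal terms contribute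
  \<open>\<beta> k\<^sup>2 |a|\<^sup>2 + \<alpha> |b|\<^sup>2\<close>, and the coupling terms, bounded through the Frobenius norms of
  \<open>\<mu>\<^sub>r\<^sup>-\<^sup>1\<xi>\<close> and \<open>\<mu>\<^sub>r\<^sup>-\<^sup>1\<zeta>\<close>, are absorbed by the smallness condition. Next,
  \<open>\<langle>T(f,g), (f,g)\<rangle> = \<langle>T(f,g), (a,b)\<rangle> - \<langle>T(f,g), (u, curl u)\<rangle>\<close>, and testing the variational
  equation with a cutoff \<open>\<chi>\<^sub>R u\<close> shows that the imaginary part of the last pairing is the
  outgoing flux through the transition layer \<open>R < |x| < 2R\<close>; by the Silver-Mueller condition it is
  \<open>\<le> O(R\<^sup>-\<^sup>2)\<close>, hence \<open>\<le> 0\<close>. Finally \<open>\<parallel>(f,g)\<parallel> \<le> \<parallel>(a,b)\<parallel> + \<parallel>(u, curl u)\<parallel>\<close> is controlled by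
  \<open>\<parallel>(a,b)\<parallel>\<close> through the a priori estimate. Herglotz fields enter only through being smooth, hence
  square integrable on the bounded domain.\<close>

section \<open>Vectors and matrices over \<open>\<complex>\<^sup>3\<close>\<close>

lemma frob_eq_norm: "frob A = norm A"
  unfolding frob_def norm_vec_def L2_set_def by (simp add: sum_nonneg)

lemma norm_power2_vec3: "(norm (a::C3))\<^sup>2 = (\<Sum>i\<in>UNIV. (cmod (a$i))\<^sup>2)"
  unfolding norm_vec_def L2_set_def by (simp add: sum_nonneg)

lemma cdot_vcnj_self: "cdot a (vcnj a) = of_real ((norm a)\<^sup>2)"
proof -
  have "cdot a (vcnj a) = (\<Sum>i\<in>UNIV. of_real ((cmod (a$i))\<^sup>2))"
    unfolding cdot_def vcnj_def by (simp add: complex_norm_square del: of_real_power)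
  also have "\<dots> = of_real ((norm a)\<^sup>2)" by (simp add: norm_power2_vec3)
  finally show ?thesis .
qed

lemma norm_vcnj [simp]: "norm (vcnj a) = norm a"
  unfolding norm_vec_def vcnj_def by simp

lemma vcnj_add: "vcnj (a + b) = vcnj a + vcnj b"
  unfolding vcnj_def by (simp add: vec_eq_iff)

lemma vcnj_scaleR: "vcnj (r *\<^sub>R a) = r *\<^sub>R vcnj a"
  unfolding vcnj_def by (simp add: vec_eq_iff)

lemma cdot_vcnj_commute: "cdot a (vcnj b) = cnj (cdot b (vcnj a))"
  unfolding cdot_def vcnj_def by (simp add: mult.commute)

lemma norm_cdot_le: "cmod (cdot a b) \<le> norm a * norm b"
proof -
  have "cmod (cdot a b) \<le> (\<Sum>i\<in>UNIV. \<bar>cmod (a$i)\<bar> * \<bar>cmod (b$i)\<bar>)"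
    unfolding cdot_def by (rule order_trans[OF norm_sum]) (simp add: norm_mult)
  also have "\<dots> \<le> L2_set (\<lambda>i. cmod (a$i)) UNIV * L2_set (\<lambda>i. cmod (b$i)) UNIV"
    by (rule L2_set_mult_ineq)
  finally show ?thesis by (simp add: norm_vec_def)
qed

lemma cdot_add_left: "cdot (a + b) c = cdot a c + cdot b c"
  unfolding cdot_def by (simp add: distrib_right sum.distrib)

lemma cdot_add_right: "cdot c (a + b) = cdot c a + cdot c b"
  unfolding cdot_def by (simp add: distrib_left sum.distrib)

lemma cdot_diff_left: "cdot (a - b) c = cdot a c - cdot b c"
  unfolding cdot_def by (simp add: left_diff_distrib sum_subtractf)

lemma cdot_scalar_mult_left: "cdot (r *s a) c = r * cdot a c"
  unfolding cdot_def by (simp add: sum_distrib_left mult.assoc)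

lemma scaleR_vec_nth_complex: "(r *\<^sub>R (v::C3))$i = complex_of_real r * v$i"
  by (simp only: vector_scaleR_component scaleR_conv_of_real[of r "v$i"])

lemma cdot_scaleR_left: "cdot (r *\<^sub>R a) b = complex_of_real r * cdot a b"
  unfolding cdot_def
  by (simp add: scaleR_vec_nth_complex sum_distrib_left mult.assoc del: vector_scaleR_component)

lemma cdot_scaleR_right: "cdot a (r *\<^sub>R b) = complex_of_real r * cdot a b"
  unfolding cdot_def
  by (simp add: scaleR_vec_nth_complex sum_distrib_left mult_ac del: vector_scaleR_component)

lemma cdot_3: "cdot a b = a$1 * b$1 + a$2 * b$2 + a$3 * b$3"
  unfolding cdot_def sum_3 ..

lemma cdot_transpose: "cdot (A *v a) b = cdot a (transpose A *v b)"
  unfolding cdot_def matrix_vector_mult_def transpose_def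
  by (simp add: sum_distrib_left sum_distrib_right mult_ac) (rule sum.swap)

lemma norm_scalar_mult_vec3: "norm (c *s (v::C3)) = cmod c * norm v"
proof -
  have "(norm (c *s v))\<^sup>2 = (cmod c * norm v)\<^sup>2"
    unfolding norm_power2_vec3 power_mult_distrib
    by (simp add: vector_scalar_mult_def norm_mult power_mult_distrib sum_distrib_left)
  thus ?thesis by simp
qed

lemma scaleR_scalar_mult_vec3: "r *\<^sub>R (c *s (v::C3)) = c *s (r *\<^sub>R v)"
  by (simp add: vec_eq_iff scaleR_vec_nth_complex vector_scalar_mult_def mult_ac
      del: vector_scaleR_component)

lemma norm_matrix_vector_mult_le: "norm ((A::M3) *v x) \<le> norm A * norm x"
proof -
  have row: "cmod ((A *v x)$i) \<le> norm (A$i) * norm x" for i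
  proof -
    have "(A *v x)$i = cdot (A$i) x" unfolding matrix_vector_mult_def cdot_def by simp
    thus ?thesis using norm_cdot_le by simp
  qed
  have "(norm (A *v x))\<^sup>2 = (\<Sum>i\<in>UNIV. (cmod ((A *v x)$i))\<^sup>2)" by (rule norm_power2_vec3)
  also have "\<dots> \<le> (\<Sum>i\<in>UNIV. (norm (A$i) * norm x)\<^sup>2)"
    by (rule sum_mono) (use row in \<open>simp add: power_mono\<close>)
  also have "\<dots> = (\<Sum>i\<in>UNIV. (norm (A$i))\<^sup>2) * (norm x)\<^sup>2"
    by (simp add: power_mult_distrib sum_distrib_right)
  also have "(\<Sum>i\<in>UNIV. (norm (A$i))\<^sup>2) = (norm A)\<^sup>2"
    unfolding norm_vec_def L2_set_def by (simp add: sum_nonneg)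
  finally have "(norm (A *v x))\<^sup>2 \<le> (norm A * norm x)\<^sup>2" by (simp add: power_mult_distrib)
  thus ?thesis by (rule power2_le_imp_le) simp
qed

lemma norm_cdot_matrix_vector_vcnj_le: "cmod (cdot ((M::M3) *v a) (vcnj b)) \<le> norm M * norm a * norm b"
proof -
  have "cmod (cdot (M *v a) (vcnj b)) \<le> norm (M *v a) * norm b"
    using norm_cdot_le[of "M *v a" "vcnj b"] by simp
  also have "\<dots> \<le> norm M * norm a * norm b" by (intro mult_right_mono norm_matrix_vector_mult_le) simp
  finally show ?thesis .
qed

lemma norm_transpose_M3: "norm (transpose (A::M3)) = norm A"
proof -
  have "(\<Sum>i\<in>UNIV. \<Sum>j\<in>UNIV. (cmod ((transpose A)$i$j))\<^sup>2) = (\<Sum>j\<in>UNIV. \<Sum>i\<in>UNIV. (cmod (A$i$j))\<^sup>2)"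
    unfolding transpose_def by simp
  also have "\<dots> = (\<Sum>i\<in>UNIV. \<Sum>j\<in>UNIV. (cmod (A$i$j))\<^sup>2)" by (rule sum.swap)
  finally show ?thesis unfolding frob_eq_norm[symmetric] frob_def by simp
qed

lemma norm_matrix_mult_le: "norm ((A::M3) ** (B::M3)) \<le> norm A * norm B"
proof -
  have row: "(A ** B)$i = transpose B *v (A$i)" for i
    by (simp add: vec_eq_iff matrix_matrix_mult_def matrix_vector_mult_def transpose_def mult.commute)
  have "(norm (A ** B))\<^sup>2 = (\<Sum>i\<in>UNIV. (norm ((A ** B)$i))\<^sup>2)"
    unfolding norm_vec_def L2_set_def by (simp add: sum_nonneg)
  also have "\<dots> \<le> (\<Sum>i\<in>UNIV. (norm B * norm (A$i))\<^sup>2)"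
  proof (rule sum_mono)
    fix i
    have "norm ((A ** B)$i) \<le> norm B * norm (A$i)"
      unfolding row using norm_matrix_vector_mult_le[of "transpose B" "A$i"] by (simp add: norm_transpose_M3)
    thus "(norm ((A ** B)$i))\<^sup>2 \<le> (norm B * norm (A$i))\<^sup>2" by (intro power_mono) auto
  qed
  also have "\<dots> = (norm B)\<^sup>2 * (\<Sum>i\<in>UNIV. (norm (A$i))\<^sup>2)"
    by (simp add: power_mult_distrib sum_distrib_left)
  also have "(\<Sum>i\<in>UNIV. (norm (A$i))\<^sup>2) = (norm A)\<^sup>2"
    unfolding norm_vec_def L2_set_def by (simp add: sum_nonneg)
  finally have "(norm (A ** B))\<^sup>2 \<le> (norm A * norm B)\<^sup>2" by (simp add: power_mult_distrib mult.commute)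
  thus ?thesis by (rule power2_le_imp_le) simp
qed

lemma scaleR_matrix_vector_mult_left: "(r *\<^sub>R (A::M3)) *v v = r *\<^sub>R (A *v v)"
proof -
  have "(r *\<^sub>R A)$i$j = complex_of_real r * A$i$j" for i j
    by (simp only: vector_scaleR_component scaleR_conv_of_real[of r "A$i$j"])
  thus ?thesis
    by (simp add: vec_eq_iff matrix_vector_mult_def scaleR_vec_nth_complex sum_distrib_left mult.assoc
        del: vector_scaleR_component)
qed

lemma Im_cdot_vcnj_ge:
  assumes k: "k > 0"
  shows "Im (cdot A (vcnj u)) \<ge> - (norm (A - (\<i> * complex_of_real k) *s u))\<^sup>2 / (2 * k)"
proof -
  have sq: "(cmod (a - \<i> * complex_of_real k * b))\<^sup>2
      = (cmod a)\<^sup>2 + k\<^sup>2 * (cmod b)\<^sup>2 - 2 * k * Im (a * cnj b)" for a b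
    unfolding cmod_power2 by (simp add: power2_eq_square algebra_simps)
  have "(norm (A - (\<i> * complex_of_real k) *s u))\<^sup>2
      = (\<Sum>i\<in>UNIV. (cmod (A$i - \<i> * complex_of_real k * u$i))\<^sup>2)"
    unfolding norm_power2_vec3 by (simp add: vector_scalar_mult_def)
  also have "\<dots> = (\<Sum>i\<in>UNIV. (cmod (A$i))\<^sup>2 + k\<^sup>2 * (cmod (u$i))\<^sup>2)
                 - 2 * k * (\<Sum>i\<in>UNIV. Im (A$i * cnj (u$i)))"
    unfolding sq by (simp only: sum_subtractf sum_distrib_left)
  also have "(\<Sum>i\<in>UNIV. Im (A$i * cnj (u$i))) = Im (cdot A (vcnj u))"
    by (simp add: cdot_def vcnj_def)
  finally have e: "(norm (A - (\<i> * complex_of_real k) *s u))\<^sup>2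
      = (\<Sum>i\<in>UNIV. (cmod (A$i))\<^sup>2 + k\<^sup>2 * (cmod (u$i))\<^sup>2) - 2 * k * Im (cdot A (vcnj u))" .
  have "(\<Sum>i\<in>UNIV. (cmod (A$i))\<^sup>2 + k\<^sup>2 * (cmod (u$i))\<^sup>2) \<ge> 0" by (intro sum_nonneg) auto
  hence "2 * k * Im (cdot A (vcnj u)) \<ge> - (norm (A - (\<i> * complex_of_real k) *s u))\<^sup>2"
    using e by linarith
  thus ?thesis using k by (simp add: field_simps)
qed

section \<open>Pointwise coercivity of the middle operator\<close>

lemma quadratic_form_nonneg:
  fixes p q c X Y :: real
  assumes "p > 0" "q \<ge> 0" "c\<^sup>2 \<le> 4 * p * q"
  shows "p * X\<^sup>2 + q * Y\<^sup>2 - c * X * Y \<ge> 0"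
proof -
  have "p * (p * X\<^sup>2 + q * Y\<^sup>2 - c * X * Y) = (p * X - c * Y / 2)\<^sup>2 + (p * q - c\<^sup>2 / 4) * Y\<^sup>2"
    by (simp add: power2_eq_square algebra_simps)
  also have "\<dots> \<ge> 0" using assms by (intro add_nonneg_nonneg) auto
  finally show ?thesis using assms(1) by (simp add: zero_le_mult_iff)
qed

text \<open>A lower bound for the smallest eigenvalue of the form \<open>\<beta> X\<^sup>2 + \<alpha> Y\<^sup>2 - (s + t) X Y\<close>.\<close>

definition coercivity_const :: "real \<Rightarrow> real \<Rightarrow> real \<Rightarrow> real \<Rightarrow> real" where
  "coercivity_const \<alpha> \<beta> s t = min (min \<alpha> \<beta> / 2) ((\<alpha> * \<beta> - ((s + t) / 2)\<^sup>2) / (\<alpha> + \<beta>))"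

lemma coercivity_const_pos:
  assumes "\<alpha> > 0" "\<beta> > 0" "((s + t) / 2)\<^sup>2 < \<alpha> * \<beta>"
  shows "coercivity_const \<alpha> \<beta> s t > 0"
  unfolding coercivity_const_def using assms by auto

lemma quadratic_form_ge_coercivity_const:
  assumes ab: "\<alpha> > 0" "\<beta> > 0" and st: "s \<ge> 0" "t \<ge> 0" "((s + t) / 2)\<^sup>2 < \<alpha> * \<beta>"
  shows "\<beta> * X\<^sup>2 + \<alpha> * Y\<^sup>2 - (s + t) * X * Y \<ge> coercivity_const \<alpha> \<beta> s t * (X\<^sup>2 + Y\<^sup>2)"
proof -
  define l where "l = coercivity_const \<alpha> \<beta> s t"
  have l_half: "l \<le> min \<alpha> \<beta> / 2" unfolding l_def coercivity_const_def by (rule min.cobounded1)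
  have "l \<le> (\<alpha> * \<beta> - ((s + t) / 2)\<^sup>2) / (\<alpha> + \<beta>)"
    unfolding l_def coercivity_const_def by (rule min.cobounded2)
  hence l_gap: "l * (\<alpha> + \<beta>) \<le> \<alpha> * \<beta> - ((s + t) / 2)\<^sup>2" using ab by (simp add: pos_le_divide_eq)
  have "l > 0" unfolding l_def using coercivity_const_pos[OF ab st(3)] .
  hence "(\<beta> - l) * (\<alpha> - l) \<ge> \<alpha> * \<beta> - l * (\<alpha> + \<beta>)" by (simp add: algebra_simps)
  hence "((s + t) / 2)\<^sup>2 \<le> (\<beta> - l) * (\<alpha> - l)" using l_gap by linarith
  hence "(s + t)\<^sup>2 \<le> 4 * ((\<beta> - l) * (\<alpha> - l))" by (simp add: power_divide)
  hence "(s + t)\<^sup>2 \<le> 4 * (\<beta> - l) * (\<alpha> - l)" by (simp only: mult.assoc)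
  moreover have "\<beta> - l > 0" using l_half ab by auto
  ultimately have "(\<beta> - l) * X\<^sup>2 + (\<alpha> - l) * Y\<^sup>2 - (s + t) * X * Y \<ge> 0"
    using l_half ab by (intro quadratic_form_nonneg) auto
  thus ?thesis unfolding l_def[symmetric] by (simp add: algebra_simps)
qed

lemma Im_middle_form_ge:
  fixes k \<alpha> \<beta> s t :: real and E Mi X Z :: M3 and a b :: C3
  assumes k: "k > 0" and ab: "\<alpha> > 0" "\<beta> > 0" and st: "((s + t) / 2)\<^sup>2 < \<alpha> * \<beta>"
    and fs: "norm (Mi ** X) \<le> s" and ft: "norm (Mi ** Z) \<le> t"
    and sX: "symmetric_mat X" and sMi: "symmetric_mat Mi"
    and hb: "- Im (cdot (Mi *v b) (vcnj b)) \<ge> \<alpha> * (norm b)\<^sup>2"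
    and ha: "Im (cdot ((E - X ** Mi ** Z) *v a) (vcnj a)) \<ge> \<beta> * (norm a)\<^sup>2"
  shows "Im (cdot (complex_of_real (k\<^sup>2) *s (((E - mat 1) - X ** Mi ** Z) *v a)
                     - (\<i> * complex_of_real k) *s ((X ** Mi) *v b)) (vcnj a)
           + cdot ((\<i> * complex_of_real k) *s ((Mi ** Z) *v a) + (mat 1 - Mi) *v b) (vcnj b))
         \<ge> coercivity_const \<alpha> \<beta> s t * min (k\<^sup>2) 1 * ((norm a)\<^sup>2 + (norm b)\<^sup>2)"
proof -
  have s0: "s \<ge> 0" and t0: "t \<ge> 0" using fs ft norm_ge_zero order_trans by blast+
  define c1 where "c1 = cdot ((X ** Mi) *v b) (vcnj a)"
  define c2 where "c2 = cdot ((Mi ** Z) *v a) (vcnj b)"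
  have "norm (X ** Mi) = norm (Mi ** X)"
    using sX sMi norm_transpose_M3[of "X ** Mi"] unfolding symmetric_mat_def by (simp add: matrix_transpose_mul)
  hence "cmod c1 \<le> norm (Mi ** X) * norm b * norm a"
    unfolding c1_def using norm_cdot_matrix_vector_vcnj_le[of "X ** Mi" b a] by simp
  also have "\<dots> \<le> s * norm b * norm a" using fs by (intro mult_right_mono) auto
  finally have "cmod c1 \<le> s * norm a * norm b" by (simp add: mult_ac)
  hence c1b: "Re c1 \<le> s * norm a * norm b" using abs_Re_le_cmod[of c1] by linarith
  have "cmod c2 \<le> norm (Mi ** Z) * norm a * norm b"
    unfolding c2_def by (rule norm_cdot_matrix_vector_vcnj_le)
  also have "\<dots> \<le> t * norm a * norm b" using ft by (intro mult_right_mono) auto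
  finally have c2b: "- Re c2 \<le> t * norm a * norm b" using abs_Re_le_cmod[of c2] by linarith
  have "Im (cdot a (vcnj a)) = 0" "Im (cdot b (vcnj b)) = 0" by (simp_all add: cdot_vcnj_self)
  hence lhs: "Im (cdot (complex_of_real (k\<^sup>2) *s (((E - mat 1) - X ** Mi ** Z) *v a)
                     - (\<i> * complex_of_real k) *s ((X ** Mi) *v b)) (vcnj a)
           + cdot ((\<i> * complex_of_real k) *s ((Mi ** Z) *v a) + (mat 1 - Mi) *v b) (vcnj b))
       = k\<^sup>2 * Im (cdot ((E - X ** Mi ** Z) *v a) (vcnj a)) - k * Re c1 + k * Re c2
         - Im (cdot (Mi *v b) (vcnj b))"
    unfolding c1_def c2_def
    by (simp add: matrix_vector_mult_diff_rdistrib algebra_simps cdot_diff_left cdot_add_left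
        cdot_scalar_mult_left)
  have "min (k\<^sup>2) 1 * ((norm a)\<^sup>2 + (norm b)\<^sup>2) \<le> (k * norm a)\<^sup>2 + (norm b)\<^sup>2"
  proof -
    have "min (k\<^sup>2) 1 * (norm a)\<^sup>2 \<le> (k * norm a)\<^sup>2"
      by (simp add: power_mult_distrib mult_right_mono)
    moreover have "min (k\<^sup>2) 1 * (norm b)\<^sup>2 \<le> (norm b)\<^sup>2" by (rule mult_left_le_one_le) auto
    ultimately show ?thesis by (simp add: distrib_left)
  qed
  hence "coercivity_const \<alpha> \<beta> s t * (min (k\<^sup>2) 1 * ((norm a)\<^sup>2 + (norm b)\<^sup>2))
      \<le> coercivity_const \<alpha> \<beta> s t * ((k * norm a)\<^sup>2 + (norm b)\<^sup>2)"
    using coercivity_const_pos[OF ab st] by (intro mult_left_mono) auto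
  also have "\<dots> \<le> \<beta> * (k * norm a)\<^sup>2 + \<alpha> * (norm b)\<^sup>2 - (s + t) * (k * norm a) * norm b"
    by (rule quadratic_form_ge_coercivity_const[OF ab s0 t0 st])
  also have "\<dots> \<le> k\<^sup>2 * Im (cdot ((E - X ** Mi ** Z) *v a) (vcnj a)) - k * Re c1 + k * Re c2
         - Im (cdot (Mi *v b) (vcnj b))"
  proof -
    have "k * Re c1 \<le> k * (s * norm a * norm b)" "k * (- Re c2) \<le> k * (t * norm a * norm b)"
      using k by (intro mult_left_mono c1b c2b; simp)+
    moreover have "k\<^sup>2 * (\<beta> * (norm a)\<^sup>2) \<le> k\<^sup>2 * Im (cdot ((E - X ** Mi ** Z) *v a) (vcnj a))"
      using ha by (simp add: mult_left_mono)
    ultimately show ?thesis using hb by (simp add: power_mult_distrib algebra_simps)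
  qed
  finally show ?thesis unfolding lhs by (simp add: mult.assoc)
qed

section \<open>Square integrable and essentially bounded fields\<close>

lemma power2_add_le_twice: "((x::real) + y)\<^sup>2 \<le> 2 * x\<^sup>2 + 2 * y\<^sup>2"
proof -
  have "0 \<le> (x - y)\<^sup>2" by simp
  thus ?thesis by (simp add: power2_eq_square algebra_simps)
qed

lemma power2_norm_diff_le:
  fixes a b :: "'a::real_normed_vector"
  shows "(norm (a - b))\<^sup>2 \<le> 2 * (norm a)\<^sup>2 + 2 * (norm b)\<^sup>2"
proof -
  have "(norm (a - b))\<^sup>2 \<le> (norm a + norm b)\<^sup>2" by (rule power_mono[OF norm_triangle_ineq4]) simp
  thus ?thesis using power2_add_le_twice[of "norm a" "norm b"] by linarith
qed

lemma le_one_plus_power2: "(x::real) \<le> 1 + x\<^sup>2"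
proof -
  have "0 \<le> (x - 1/2)\<^sup>2" by simp
  thus ?thesis by (simp add: power2_eq_square algebra_simps)
qed

lemma continuous_on_imp_borel_measurable_lebesgue:
  "continuous_on UNIV f \<Longrightarrow> f \<in> borel_measurable lebesgue"
  using continuous_imp_measurable_on_sets_lebesgue[of UNIV f] by (simp add: lebesgue_on_UNIV_eq)

lemma borel_measurable_cdot [measurable (raw)]:
  "f \<in> borel_measurable M \<Longrightarrow> g \<in> borel_measurable M \<Longrightarrow> (\<lambda>x. cdot (f x) (g x)) \<in> borel_measurable M"
  by (rule borel_measurable_continuous_Pair) (auto simp: cdot_def split_beta' intro!: continuous_intros)

lemma borel_measurable_vcnj [measurable (raw)]:
  "f \<in> borel_measurable M \<Longrightarrow> (\<lambda>x. vcnj (f x)) \<in> borel_measurable M"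
  by (erule measurable_compose[OF _ borel_measurable_continuous_onI])
    (auto simp: vcnj_def intro!: continuous_intros)

lemma borel_measurable_matrix_vector_mult [measurable (raw)]:
  "f \<in> borel_measurable M \<Longrightarrow> g \<in> borel_measurable M \<Longrightarrow>
   (\<lambda>x. (f x :: M3) *v (g x :: C3)) \<in> borel_measurable M"
  by (rule borel_measurable_continuous_Pair)
    (auto simp: matrix_vector_mult_def split_beta' intro!: continuous_intros)

lemma borel_measurable_matrix_mult [measurable (raw)]:
  "f \<in> borel_measurable M \<Longrightarrow> g \<in> borel_measurable M \<Longrightarrow>
   (\<lambda>x. (f x :: M3) ** (g x :: M3)) \<in> borel_measurable M"
  by (rule borel_measurable_continuous_Pair)
    (auto simp: matrix_matrix_mult_def split_beta' intro!: continuous_intros)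

lemma borel_measurable_scalar_mult [measurable (raw)]:
  "f \<in> borel_measurable M \<Longrightarrow> g \<in> borel_measurable M \<Longrightarrow>
   (\<lambda>x. (f x :: complex) *s (g x :: C3)) \<in> borel_measurable M"
  by (rule borel_measurable_continuous_Pair)
    (auto simp: vector_scalar_mult_def split_beta' intro!: continuous_intros)

lemma L2on_iff:
  "L2on S F \<longleftrightarrow> (\<lambda>x. indicator S x *\<^sub>R F x) \<in> borel_measurable lebesgue \<and>
     integrable lebesgue (\<lambda>x. (norm (indicator S x *\<^sub>R F x))\<^sup>2)"
proof -
  have e: "(\<integral>\<^sup>+ x. ennreal (norm ((norm (indicator S x *\<^sub>R F x))\<^sup>2)) \<partial>lebesgue)
        = (\<integral>\<^sup>+ x. ennreal (indicator S x * (norm (F x))\<^sup>2) \<partial>lebesgue)"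
    by (intro nn_integral_cong) (simp add: indicator_def)
  have "(\<lambda>x. indicator S x *\<^sub>R F x) \<in> borel_measurable lebesgue \<Longrightarrow>
     (\<lambda>x. (norm (indicator S x *\<^sub>R F x))\<^sup>2) \<in> borel_measurable lebesgue"
    by (erule measurable_compose[OF _ borel_measurable_continuous_onI[of "\<lambda>v. (norm v)\<^sup>2"]])
      (intro continuous_intros)
  thus ?thesis unfolding L2on_def integrable_iff_bounded e by blast
qed

lemma L2on_add:
  assumes "L2on S F" "L2on S G"
  shows "L2on S (\<lambda>x. F x + G x)"
proof -
  define F' where "F' x = indicator S x *\<^sub>R F x" for x
  define G' where "G' x = indicator S x *\<^sub>R G x" for x
  have m: "F' \<in> borel_measurable lebesgue" "G' \<in> borel_measurable lebesgue"
    and i: "integrable lebesgue (\<lambda>x. (norm (F' x))\<^sup>2)" "integrable lebesgue (\<lambda>x. (norm (G' x))\<^sup>2)"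
    using assms unfolding L2on_iff F'_def G'_def by auto
  have e: "indicator S x *\<^sub>R (F x + G x) = F' x + G' x" for x
    unfolding F'_def G'_def by (simp add: scaleR_add_right)
  have "integrable lebesgue (\<lambda>x. (norm (F' x + G' x))\<^sup>2)"
  proof (rule Bochner_Integration.integrable_bound)
    show "integrable lebesgue (\<lambda>x. 2 * (norm (F' x))\<^sup>2 + 2 * (norm (G' x))\<^sup>2)" using i by auto
    show "(\<lambda>x. (norm (F' x + G' x))\<^sup>2) \<in> borel_measurable lebesgue" using m by measurable
    have "(norm (F' x + G' x))\<^sup>2 \<le> 2 * (norm (F' x))\<^sup>2 + 2 * (norm (G' x))\<^sup>2" for x
      using power_mono[OF norm_triangle_ineq norm_ge_zero, of "F' x" "G' x" 2]
        power2_add_le_twice[of "norm (F' x)" "norm (G' x)"] by linarith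
    thus "AE x in lebesgue. norm ((norm (F' x + G' x))\<^sup>2)
        \<le> norm (2 * (norm (F' x))\<^sup>2 + 2 * (norm (G' x))\<^sup>2)" by simp
  qed
  thus ?thesis unfolding L2on_iff e using m by simp
qed

lemma L2on_scalar_mult:
  assumes F: "L2on S F"
  shows "L2on S (\<lambda>x. (c::complex) *s (F x :: C3))"
proof -
  have m: "(\<lambda>x. indicator S x *\<^sub>R F x) \<in> borel_measurable lebesgue"
    and i: "integrable lebesgue (\<lambda>x. (norm (indicator S x *\<^sub>R F x))\<^sup>2)" using F unfolding L2on_iff by auto
  have "(\<lambda>x. c *s (indicator S x *\<^sub>R F x)) \<in> borel_measurable lebesgue" using m by measurable
  hence m': "(\<lambda>x. indicator S x *\<^sub>R (c *s F x)) \<in> borel_measurable lebesgue"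
    by (simp only: scaleR_scalar_mult_vec3)
  have e: "(norm (indicator S x *\<^sub>R (c *s F x)))\<^sup>2 = (cmod c)\<^sup>2 * (norm (indicator S x *\<^sub>R F x))\<^sup>2" for x
    unfolding scaleR_scalar_mult_vec3 norm_scalar_mult_vec3 by (simp add: power_mult_distrib)
  show ?thesis unfolding L2on_iff e using m' i by simp
qed

lemma L2on_diff:
  assumes "L2on S F" "L2on S G"
  shows "L2on S (\<lambda>x. F x - (G x :: C3))"
proof -
  have "(\<lambda>x. F x - G x) = (\<lambda>x. F x + (-1) *s G x)"
    by (simp add: fun_eq_iff vec_eq_iff vector_scalar_mult_def)
  thus ?thesis by (simp only:) (intro L2on_add L2on_scalar_mult assms)
qed

lemma L2on_matrix_vector_mult:
  assumes F: "L2on S F" and M_meas: "(\<lambda>x. indicator S x *\<^sub>R M x) \<in> borel_measurable lebesgue"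
    and M_bound: "AE x in lebesgue. x \<in> S \<longrightarrow> norm (M x) \<le> B"
  shows "L2on S (\<lambda>x. (M x :: M3) *v F x)"
proof -
  have m: "(\<lambda>x. indicator S x *\<^sub>R F x) \<in> borel_measurable lebesgue"
    and i: "integrable lebesgue (\<lambda>x. (norm (indicator S x *\<^sub>R F x))\<^sup>2)" using F unfolding L2on_iff by auto
  have e: "indicator S x *\<^sub>R (M x *v F x) = (indicator S x *\<^sub>R M x) *v (indicator S x *\<^sub>R F x)" for x
    by (simp add: indicator_def)
  have m': "(\<lambda>x. indicator S x *\<^sub>R (M x *v F x)) \<in> borel_measurable lebesgue"
    unfolding e using m M_meas by measurable
  have "integrable lebesgue (\<lambda>x. (norm (indicator S x *\<^sub>R (M x *v F x)))\<^sup>2)"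
  proof (rule Bochner_Integration.integrable_bound)
    show "integrable lebesgue (\<lambda>x. B\<^sup>2 * (norm (indicator S x *\<^sub>R F x))\<^sup>2)" using i by auto
    show "(\<lambda>x. (norm (indicator S x *\<^sub>R (M x *v F x)))\<^sup>2) \<in> borel_measurable lebesgue"
      using m' by measurable
    show "AE x in lebesgue. norm ((norm (indicator S x *\<^sub>R (M x *v F x)))\<^sup>2)
          \<le> norm (B\<^sup>2 * (norm (indicator S x *\<^sub>R F x))\<^sup>2)"
      using M_bound
    proof (eventually_elim, cases)
      fix x assume b: "x \<in> S \<longrightarrow> norm (M x) \<le> B" and x: "x \<in> S"
      have "norm (M x *v F x) \<le> B * norm (F x)"
        using norm_matrix_vector_mult_le[of "M x" "F x"] b x
        by (meson mult_right_mono norm_ge_zero order_trans)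
      hence "(norm (M x *v F x))\<^sup>2 \<le> (B * norm (F x))\<^sup>2" by (intro power_mono) auto
      thus "norm ((norm (indicator S x *\<^sub>R (M x *v F x)))\<^sup>2) \<le> norm (B\<^sup>2 * (norm (indicator S x *\<^sub>R F x))\<^sup>2)"
        using x by (simp add: power_mult_distrib)
    qed simp
  qed
  thus ?thesis unfolding L2on_iff using m' by simp
qed

lemma L2on_subset:
  assumes F: "L2on T F" and ST: "S \<subseteq> T" and S: "S \<in> sets lebesgue"
  shows "L2on S F"
proof -
  have m: "(\<lambda>x. indicator T x *\<^sub>R F x) \<in> borel_measurable lebesgue"
    and i: "(\<integral>\<^sup>+ x. ennreal (indicator T x * (norm (F x))\<^sup>2) \<partial>lebesgue) < \<infinity>"
    using F unfolding L2on_def by auto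
  have e: "(\<lambda>x. indicator S x *\<^sub>R F x) = (\<lambda>x. indicator S x *\<^sub>R (indicator T x *\<^sub>R F x))"
    using ST by (auto simp: indicator_def fun_eq_iff)
  have "(\<lambda>x. indicator S x *\<^sub>R F x) \<in> borel_measurable lebesgue" unfolding e using m S by measurable
  moreover have "(\<integral>\<^sup>+ x. ennreal (indicator S x * (norm (F x))\<^sup>2) \<partial>lebesgue)
      \<le> (\<integral>\<^sup>+ x. ennreal (indicator T x * (norm (F x))\<^sup>2) \<partial>lebesgue)"
    using ST by (intro nn_integral_mono) (auto simp: indicator_def)
  ultimately show ?thesis unfolding L2on_def using i by (meson order.strict_trans1)
qed

lemma continuous_on_bounded_on_ball:
  fixes F :: "R3 \<Rightarrow> 'a::real_normed_vector"
  assumes "continuous_on UNIV F"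
  obtains B where "\<And>x. norm x \<le> r \<Longrightarrow> norm (F x) \<le> B"
proof -
  have "compact (F ` cball 0 r)"
    by (rule compact_continuous_image[OF continuous_on_subset[OF assms]]) auto
  then obtain B where "\<forall>y\<in>F ` cball 0 r. norm y \<le> B" using compact_imp_bounded bounded_iff by metis
  thus ?thesis using that by (force simp: mem_cball_0)
qed

lemma integrable_indicator_ball: "integrable lebesgue (indicator (ball (0::R3) r) :: R3 \<Rightarrow> real)"
  using lmeasurable_ball[of "0::R3" r] unfolding fmeasurable_def
  by (intro integrable_real_indicator) auto

lemma L2on_continuous:
  assumes c: "continuous_on UNIV F" and b: "bounded \<Omega>" and s: "\<Omega> \<in> sets lebesgue"
  shows "L2on \<Omega> (F :: R3 \<Rightarrow> C3)"
proof -
  obtain r where r: "\<Omega> \<subseteq> ball 0 r" using b bounded_subset_ballD by blast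
  obtain B where B: "\<And>x. norm x \<le> r \<Longrightarrow> norm (F x) \<le> B"
    using continuous_on_bounded_on_ball[OF c, where r = r] by blast
  have m: "(\<lambda>x. indicator \<Omega> x *\<^sub>R F x) \<in> borel_measurable lebesgue"
    using continuous_on_imp_borel_measurable_lebesgue[OF c] s by measurable
  have "integrable lebesgue (\<lambda>x. (norm (indicator \<Omega> x *\<^sub>R F x))\<^sup>2)"
  proof (rule Bochner_Integration.integrable_bound)
    show "integrable lebesgue (\<lambda>x::R3. B\<^sup>2 * indicator (ball 0 r) x)"
      using integrable_indicator_ball by auto
    show "(\<lambda>x. (norm (indicator \<Omega> x *\<^sub>R F x))\<^sup>2) \<in> borel_measurable lebesgue" using m by measurable
    have "norm ((norm (indicator \<Omega> x *\<^sub>R F x))\<^sup>2) \<le> norm (B\<^sup>2 * indicator (ball 0 r) x)" for x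
    proof (cases "x \<in> \<Omega>")
      case True
      hence "(norm (F x))\<^sup>2 \<le> B\<^sup>2" using B r by (intro power_mono) (auto simp: subset_iff)
      thus ?thesis using True r by auto
    qed simp
    thus "AE x in lebesgue. norm ((norm (indicator \<Omega> x *\<^sub>R F x))\<^sup>2) \<le> norm (B\<^sup>2 * indicator (ball 0 r) x)"
      by simp
  qed
  thus ?thesis unfolding L2on_iff using m by simp
qed

lemma set_integrable_cdot_vcnj:
  assumes F: "L2on \<Omega> F" and G: "L2on \<Omega> G"
  shows "set_integrable lebesgue \<Omega> (\<lambda>x. cdot (F x) (vcnj (G x)))"
  unfolding set_integrable_def
proof -
  define F' where "F' x = indicator \<Omega> x *\<^sub>R F x" for x
  define G' where "G' x = indicator \<Omega> x *\<^sub>R G x" for x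
  have m: "F' \<in> borel_measurable lebesgue" "G' \<in> borel_measurable lebesgue"
    and i: "integrable lebesgue (\<lambda>x. (norm (F' x))\<^sup>2)" "integrable lebesgue (\<lambda>x. (norm (G' x))\<^sup>2)"
    using F G unfolding L2on_iff F'_def G'_def by auto
  have e: "indicator \<Omega> x *\<^sub>R cdot (F x) (vcnj (G x)) = cdot (F' x) (vcnj (G' x))" for x
    unfolding F'_def G'_def by (simp add: indicator_def cdot_def vcnj_def)
  show "integrable lebesgue (\<lambda>x. indicator \<Omega> x *\<^sub>R cdot (F x) (vcnj (G x)))" unfolding e
  proof (rule Bochner_Integration.integrable_bound)
    show "integrable lebesgue (\<lambda>x. (norm (F' x))\<^sup>2 + (norm (G' x))\<^sup>2)" using i by auto
    show "(\<lambda>x. cdot (F' x) (vcnj (G' x))) \<in> borel_measurable lebesgue" using m by measurable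
    have "norm (cdot (F' x) (vcnj (G' x))) \<le> (norm (F' x))\<^sup>2 + (norm (G' x))\<^sup>2" for x
    proof -
      have "0 \<le> norm (F' x) * norm (G' x)" by simp
      moreover have "norm (cdot (F' x) (vcnj (G' x))) \<le> norm (F' x) * norm (G' x)"
        using norm_cdot_le[of "F' x" "vcnj (G' x)"] by simp
      ultimately show ?thesis
        using sum_squares_bound[of "norm (F' x)" "norm (G' x)"] unfolding power2_eq_square by linarith
    qed
    thus "AE x in lebesgue. norm (cdot (F' x) (vcnj (G' x))) \<le> norm ((norm (F' x))\<^sup>2 + (norm (G' x))\<^sup>2)"
      by simp
  qed
qed

lemma set_integrable_norm_power2:
  assumes "L2on \<Omega> F"
  shows "set_integrable lebesgue \<Omega> (\<lambda>x. (norm (F x))\<^sup>2)"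
proof -
  have "(\<lambda>x. (norm (indicator \<Omega> x *\<^sub>R F x))\<^sup>2) = (\<lambda>x. indicator \<Omega> x *\<^sub>R (norm (F x))\<^sup>2)"
    by (simp add: indicator_def fun_eq_iff)
  thus ?thesis using assms unfolding L2on_iff set_integrable_def by simp
qed

lemma Linf_onD:
  assumes "Linf_on D A"
  obtains B where "(\<lambda>x. indicator D x *\<^sub>R A x) \<in> borel_measurable lebesgue"
    and "AE x in lebesgue. x \<in> D \<longrightarrow> norm (A x) \<le> B"
  using assms unfolding Linf_on_def by blast

lemma Linf_on_mult:
  assumes "Linf_on D A" "Linf_on D B"
  shows "Linf_on D (\<lambda>x. A x ** B x)"
proof -
  obtain BA where mA: "(\<lambda>x. indicator D x *\<^sub>R A x) \<in> borel_measurable lebesgue"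
    and bA: "AE x in lebesgue. x \<in> D \<longrightarrow> norm (A x) \<le> BA" using assms(1) by (rule Linf_onD)
  obtain BB where mB: "(\<lambda>x. indicator D x *\<^sub>R B x) \<in> borel_measurable lebesgue"
    and bB: "AE x in lebesgue. x \<in> D \<longrightarrow> norm (B x) \<le> BB" using assms(2) by (rule Linf_onD)
  have e: "indicator D x *\<^sub>R (A x ** B x) = (indicator D x *\<^sub>R A x) ** (indicator D x *\<^sub>R B x)" for x
    by (simp add: indicator_def)
  have "(\<lambda>x. indicator D x *\<^sub>R (A x ** B x)) \<in> borel_measurable lebesgue"
    unfolding e using mA mB by measurable
  moreover have "AE x in lebesgue. x \<in> D \<longrightarrow> norm (A x ** B x) \<le> BA * BB"
    using bA bB
  proof (eventually_elim, intro impI)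
    fix x assume "x \<in> D \<longrightarrow> norm (A x) \<le> BA" "x \<in> D \<longrightarrow> norm (B x) \<le> BB" "x \<in> D"
    hence "norm (A x) * norm (B x) \<le> BA * BB" by (intro mult_mono) (auto intro: order_trans[OF norm_ge_zero])
    thus "norm (A x ** B x) \<le> BA * BB" using norm_matrix_mult_le[of "A x" "B x"] by linarith
  qed
  ultimately show ?thesis unfolding Linf_on_def by blast
qed

lemma Linf_on_diff:
  assumes "Linf_on D A" "Linf_on D B"
  shows "Linf_on D (\<lambda>x. A x - B x)"
proof -
  obtain BA where mA: "(\<lambda>x. indicator D x *\<^sub>R A x) \<in> borel_measurable lebesgue"
    and bA: "AE x in lebesgue. x \<in> D \<longrightarrow> norm (A x) \<le> BA" using assms(1) by (rule Linf_onD)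
  obtain BB where mB: "(\<lambda>x. indicator D x *\<^sub>R B x) \<in> borel_measurable lebesgue"
    and bB: "AE x in lebesgue. x \<in> D \<longrightarrow> norm (B x) \<le> BB" using assms(2) by (rule Linf_onD)
  have e: "indicator D x *\<^sub>R (A x - B x) = indicator D x *\<^sub>R A x - indicator D x *\<^sub>R B x" for x
    by (simp add: scaleR_diff_right)
  have "(\<lambda>x. indicator D x *\<^sub>R (A x - B x)) \<in> borel_measurable lebesgue"
    unfolding e using mA mB by measurable
  moreover have "AE x in lebesgue. x \<in> D \<longrightarrow> norm (A x - B x) \<le> BA + BB"
    using bA bB
  proof (eventually_elim, intro impI)
    fix x assume "x \<in> D \<longrightarrow> norm (A x) \<le> BA" "x \<in> D \<longrightarrow> norm (B x) \<le> BB" "x \<in> D"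
    thus "norm (A x - B x) \<le> BA + BB" using norm_triangle_ineq4[of "A x" "B x"] by auto
  qed
  ultimately show ?thesis unfolding Linf_on_def by blast
qed

lemma Linf_on_const: "D \<in> sets lebesgue \<Longrightarrow> Linf_on D (\<lambda>x. C)"
  unfolding Linf_on_def by (auto intro!: exI[of _ "norm C"])

lemma L2on_Linf_on_mult:
  assumes "L2on S F" "Linf_on S M"
  shows "L2on S (\<lambda>x. (M x :: M3) *v F x)"
proof -
  obtain B where "(\<lambda>x. indicator S x *\<^sub>R M x) \<in> borel_measurable lebesgue"
    and "AE x in lebesgue. x \<in> S \<longrightarrow> norm (M x) \<le> B" using assms(2) by (rule Linf_onD)
  thus ?thesis by (rule L2on_matrix_vector_mult[OF assms(1)])
qed

section \<open>A radial cutoff function\<close>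

lemma has_derivative_of_quadratic_remainder:
  fixes f :: "'a::real_normed_vector \<Rightarrow> 'b::real_normed_vector"
  assumes D: "bounded_linear D" and b: "\<And>y. norm (f y - f x - D (y - x)) \<le> K * (norm (y - x))\<^sup>2"
  shows "(f has_derivative D) (at x)"
  unfolding has_derivative_iff_norm
proof (intro conjI D)
  have "((\<lambda>y. \<bar>K\<bar> * norm (y - x)) \<longlongrightarrow> \<bar>K\<bar> * norm (x - x)) (at x)"
    by (intro tendsto_intros)
  hence t: "((\<lambda>y. \<bar>K\<bar> * norm (y - x)) \<longlongrightarrow> 0) (at x)" by simp
  have "norm (norm (f y - f x - D (y - x)) / norm (y - x)) \<le> \<bar>K\<bar> * norm (y - x)" for y
  proof (cases "y = x")
    case False
    have "K * (norm (y - x))\<^sup>2 \<le> \<bar>K\<bar> * (norm (y - x))\<^sup>2" by (intro mult_right_mono) auto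
    hence "norm (f y - f x - D (y - x)) \<le> \<bar>K\<bar> * norm (y - x) * norm (y - x)"
      using b[of y] by (simp add: power2_eq_square mult.assoc)
    thus ?thesis using False by (simp add: divide_le_eq)
  qed simp
  thus "((\<lambda>y. norm (f y - f x - D (y - x)) / norm (y - x)) \<longlongrightarrow> 0) (at x)"
    by (intro Lim_null_comparison[OF always_eventually t]) blast
qed

definition pos_part_sq :: "real \<Rightarrow> real" where "pos_part_sq t = (max 0 t)\<^sup>2"

lemma pos_part_sq_has_real_derivative: "(pos_part_sq has_real_derivative (2 * max 0 t)) (at t)"
proof -
  have "\<bar>(max 0 y)\<^sup>2 - (max 0 t)\<^sup>2 - (y - t) * (2 * max 0 t)\<bar> \<le> 1 * \<bar>y - t\<bar>\<^sup>2" for y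
  proof (cases "t \<ge> 0"; cases "y \<ge> 0")
    assume "t \<ge> 0" "y \<ge> 0"
    hence "(max 0 y)\<^sup>2 - (max 0 t)\<^sup>2 - (y - t) * (2 * max 0 t) = (y - t)\<^sup>2"
      by (simp add: max_def power2_eq_square algebra_simps)
    thus ?thesis by simp
  next
    assume a: "t \<ge> 0" "\<not> y \<ge> 0"
    hence e: "(max 0 y)\<^sup>2 - (max 0 t)\<^sup>2 - (y - t) * (2 * max 0 t) = t * t - 2 * t * y"
      by (simp add: max_def power2_eq_square algebra_simps)
    have "t * y \<le> 0" using a by (simp add: mult_nonneg_nonpos)
    hence "t * t - 2 * t * y \<ge> 0" using mult_nonneg_nonneg[of t t] a by linarith
    moreover have "t * t - 2 * t * y \<le> (y - t)\<^sup>2" by (simp add: power2_eq_square algebra_simps)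
    ultimately show ?thesis unfolding e by simp
  next
    assume a: "\<not> t \<ge> 0" "y \<ge> 0"
    hence "y * y \<le> (y - t) * (y - t)" by (intro mult_mono) auto
    thus ?thesis using a by (simp add: max_def power2_eq_square)
  qed (simp add: max_def)
  hence "(pos_part_sq has_derivative (\<lambda>h. h * (2 * max 0 t))) (at t)"
    unfolding pos_part_sq_def
    by (intro has_derivative_of_quadratic_remainder[where K = 1] bounded_linear_mult_left) simp
  thus ?thesis unfolding has_field_derivative_def
    by (rule has_derivative_eq_rhs) (simp add: fun_eq_iff mult.commute)
qed

text \<open>A \<open>C\<^sup>1\<close> quadratic spline in \<open>t = |x|\<^sup>2\<close>, equal to \<open>1\<close> for \<open>t \<le> R\<^sup>2\<close> and to \<open>0\<close> for
  \<open>t \<ge> 4 R\<^sup>2\<close>; \<open>cutoff_profile'\<close> is its derivative.\<close>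

definition cutoff_profile :: "real \<Rightarrow> real \<Rightarrow> real" where
  "cutoff_profile R t = 1 - 2 / (9 * R ^ 4) *
     (pos_part_sq (t - R\<^sup>2) - 2 * pos_part_sq (t - 5/2 * R\<^sup>2) + pos_part_sq (t - 4 * R\<^sup>2))"

definition cutoff_profile' :: "real \<Rightarrow> real \<Rightarrow> real" where
  "cutoff_profile' R t = - (2 / (9 * R ^ 4)) *
     (2 * max 0 (t - R\<^sup>2) - 4 * max 0 (t - 5/2 * R\<^sup>2) + 2 * max 0 (t - 4 * R\<^sup>2))"

lemma cutoff_profile_has_real_derivative:
  "(cutoff_profile R has_real_derivative cutoff_profile' R t) (at t)"
proof -
  define g where "g t = pos_part_sq (t - R\<^sup>2) - 2 * pos_part_sq (t - 5/2 * R\<^sup>2) + pos_part_sq (t - 4 * R\<^sup>2)"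
    for t
  define c where "c = 2 / (9 * R ^ 4)"
  have "(g has_real_derivative
      2 * max 0 (t - R\<^sup>2) - 4 * max 0 (t - 5/2 * R\<^sup>2) + 2 * max 0 (t - 4 * R\<^sup>2)) (at t)"
    unfolding g_def
    by (auto intro!: derivative_eq_intros DERIV_chain2[OF pos_part_sq_has_real_derivative])
  from DERIV_diff[OF DERIV_const DERIV_cmult[OF this, of c], of 1]
  show ?thesis unfolding cutoff_profile_def cutoff_profile'_def g_def[symmetric] c_def[symmetric]
    by simp
qed

lemma continuous_on_cutoff_profile': "continuous_on UNIV (cutoff_profile' R)"
  unfolding cutoff_profile'_def by (intro continuous_intros)

lemma cutoff_profile_inner:
  assumes "t \<le> R\<^sup>2"
  shows "cutoff_profile R t = 1" "cutoff_profile' R t = 0"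
proof -
  have "max 0 (t - R\<^sup>2) = 0" "max 0 (t - 5/2 * R\<^sup>2) = 0" "max 0 (t - 4 * R\<^sup>2) = 0"
    using assms zero_le_power2[of R] by linarith+
  thus "cutoff_profile R t = 1" "cutoff_profile' R t = 0"
    unfolding cutoff_profile_def cutoff_profile'_def pos_part_sq_def by simp_all
qed

lemma cutoff_profile_outer:
  assumes R: "R \<noteq> 0" and t: "t \<ge> 4 * R\<^sup>2"
  shows "cutoff_profile R t = 0" "cutoff_profile' R t = 0"
proof -
  have m: "max 0 (t - R\<^sup>2) = t - R\<^sup>2" "max 0 (t - 5/2 * R\<^sup>2) = t - 5/2 * R\<^sup>2"
    "max 0 (t - 4 * R\<^sup>2) = t - 4 * R\<^sup>2"
    using t zero_le_power2[of R] by linarith+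
  have "pos_part_sq (t - R\<^sup>2) - 2 * pos_part_sq (t - 5/2 * R\<^sup>2) + pos_part_sq (t - 4 * R\<^sup>2)
      = 9 / 2 * R ^ 4"
    unfolding pos_part_sq_def m by (simp add: power2_eq_square power4_eq_xxxx algebra_simps)
  thus "cutoff_profile R t = 0" unfolding cutoff_profile_def using R by simp
  show "cutoff_profile' R t = 0" unfolding cutoff_profile'_def m by (simp add: algebra_simps)
qed

lemma cutoff_profile'_bounds:
  assumes "R > 0"
  shows "cutoff_profile' R t \<le> 0" "cutoff_profile' R t \<ge> - 1 / (3/2 * R\<^sup>2)"
proof -
  define q where "q = 2 * max 0 (t - R\<^sup>2) - 4 * max 0 (t - 5/2 * R\<^sup>2) + 2 * max 0 (t - 4 * R\<^sup>2)"
  have "0 \<le> 2 * max 0 (t - r) - 4 * max 0 (t - 5/2 * r) + 2 * max 0 (t - 4 * r)"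
    "2 * max 0 (t - r) - 4 * max 0 (t - 5/2 * r) + 2 * max 0 (t - 4 * r) \<le> 3 * r" if "r > 0" for r
    using that by (auto simp: max_def)
  hence q0: "q \<ge> 0" and q1: "q \<le> 3 * R\<^sup>2" unfolding q_def using assms by simp_all
  have e: "cutoff_profile' R t = - (2 / (9 * R ^ 4)) * q" unfolding cutoff_profile'_def q_def ..
  show "cutoff_profile' R t \<le> 0" unfolding e using q0 by (simp add: mult_nonpos_nonneg)
  have "2 / (9 * R ^ 4) * q \<le> 2 / (9 * R ^ 4) * (3 * R\<^sup>2)" using q1 by (intro mult_left_mono) auto
  also have "\<dots> = 1 / (3/2 * R\<^sup>2)" using assms by (simp add: power2_eq_square power4_eq_xxxx)
  finally show "cutoff_profile' R t \<ge> - 1 / (3/2 * R\<^sup>2)" unfolding e by simp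
qed

definition cutoff :: "real \<Rightarrow> R3 \<Rightarrow> real" where
  "cutoff R x = cutoff_profile R (x \<bullet> x)"

definition grad_cutoff :: "real \<Rightarrow> R3 \<Rightarrow> R3" where
  "grad_cutoff R x = (2 * cutoff_profile' R (x \<bullet> x)) *\<^sub>R x"

lemma cutoff_has_derivative: "(cutoff R has_derivative (\<lambda>v. grad_cutoff R x \<bullet> v)) (at x)"
proof -
  have "((\<lambda>x. x \<bullet> x) has_derivative (\<lambda>v. x \<bullet> v + v \<bullet> x)) (at x)"
    by (rule has_derivative_inner[OF has_derivative_ident has_derivative_ident])
  moreover have "(cutoff_profile R has_derivative (\<lambda>h. cutoff_profile' R (x \<bullet> x) * h)) (at (x \<bullet> x))"
    using cutoff_profile_has_real_derivative[of R "x \<bullet> x"] by (simp add: has_field_derivative_def)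
  ultimately have "(cutoff R has_derivative (\<lambda>v. cutoff_profile' R (x \<bullet> x) * (x \<bullet> v + v \<bullet> x))) (at x)"
    unfolding cutoff_def by (rule has_derivative_compose[where g = "cutoff_profile R", unfolded o_def])
  moreover have "(\<lambda>v. cutoff_profile' R (x \<bullet> x) * (x \<bullet> v + v \<bullet> x)) = (\<lambda>v. grad_cutoff R x \<bullet> v)"
    unfolding grad_cutoff_def by (auto simp: inner_commute algebra_simps)
  ultimately show ?thesis by simp
qed

lemma continuous_on_cutoff: "continuous_on UNIV (cutoff R)"
  using cutoff_has_derivative by (meson continuous_at_imp_continuous_on has_derivative_continuous)

lemma continuous_on_grad_cutoff: "continuous_on UNIV (grad_cutoff R)"
  unfolding grad_cutoff_def
  by (intro continuous_intros continuous_on_compose2[OF continuous_on_cutoff_profile']) auto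

lemma cutoff_inner:
  assumes "norm x \<le> R"
  shows "cutoff R x = 1" "grad_cutoff R x = 0"
proof -
  have "x \<bullet> x \<le> R\<^sup>2" using assms by (simp add: power2_norm_eq_inner[symmetric] power_mono)
  thus "cutoff R x = 1" "grad_cutoff R x = 0"
    unfolding cutoff_def grad_cutoff_def by (simp_all add: cutoff_profile_inner)
qed

lemma cutoff_outer:
  assumes R: "R > 0" and x: "norm x \<ge> 2 * R"
  shows "cutoff R x = 0" "grad_cutoff R x = 0"
proof -
  have "(2 * R)\<^sup>2 \<le> (norm x)\<^sup>2" using R x by (intro power_mono) auto
  hence "x \<bullet> x \<ge> 4 * R\<^sup>2" by (simp add: power2_norm_eq_inner power_mult_distrib)
  thus "cutoff R x = 0" "grad_cutoff R x = 0"
    unfolding cutoff_def grad_cutoff_def using R by (simp_all add: cutoff_profile_outer)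
qed

lemma grad_cutoff_radial:
  assumes R: "R > 0"
  obtains c where "c \<le> 0" "\<bar>c\<bar> \<le> 4 / R" "grad_cutoff R x = c *\<^sub>R (x /\<^sub>R norm x)"
proof (cases "norm x < 2 * R \<and> x \<noteq> 0")
  case False
  have "grad_cutoff R x = 0"
  proof (cases "x = 0")
    case True thus ?thesis by (simp add: grad_cutoff_def)
  next
    case False
    thus ?thesis using \<open>\<not> (norm x < 2 * R \<and> x \<noteq> 0)\<close> cutoff_outer(2)[OF R] by simp
  qed
  thus ?thesis using that[of 0] R by simp
next
  case True
  define e where "e = cutoff_profile' R (x \<bullet> x)"
  have e0: "e \<le> 0" and e1: "e \<ge> - 1 / (3/2 * R\<^sup>2)"
    using cutoff_profile'_bounds[OF R] unfolding e_def by auto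
  have "grad_cutoff R x = (2 * e * norm x) *\<^sub>R (x /\<^sub>R norm x)"
    unfolding grad_cutoff_def e_def using True by simp
  moreover have "2 * e * norm x \<le> 0" using e0 by (simp add: mult_nonpos_nonneg)
  moreover have "\<bar>2 * e * norm x\<bar> \<le> 4 / R"
  proof -
    have "\<bar>2 * e * norm x\<bar> = 2 * (- e) * norm x" using e0 by (simp add: abs_mult)
    also have "\<dots> \<le> 2 * (1 / (3/2 * R\<^sup>2)) * (2 * R)" using e0 e1 True by (intro mult_mono) auto
    also have "\<dots> \<le> 4 / R" using R by (simp add: power2_eq_square field_simps)
    finally show ?thesis .
  qed
  ultimately show ?thesis using that by blast
qed

section \<open>Cutting off a field in \<open>H\<^sub>l\<^sub>o\<^sub>c(curl)\<close>\<close>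

lemma vec3_eq_iff: "(x::'a^3) = y \<longleftrightarrow> x$1 = y$1 \<and> x$2 = y$2 \<and> x$3 = y$3"
  by (simp add: vec_eq_iff forall_3)

lemma continuous_on_vector3:
  assumes "continuous_on S a" "continuous_on S b" "continuous_on S c"
  shows "continuous_on S (\<lambda>x. vector [a x, b x, c x] :: 'a::real_normed_vector^3)"
proof -
  have "(\<lambda>x. vector [a x, b x, c x] :: 'a^3) = (\<lambda>x. \<chi> i. if i = 1 then a x else if i = 2 then b x else c x)"
    by (simp add: fun_eq_iff vec3_eq_iff)
  moreover have "continuous_on S (\<lambda>x. (if i = 1 then a x else if i = 2 then b x else c x))" for i :: 3
    using assms by (cases "i = 1"; cases "i = 2") auto
  ultimately show ?thesis by (simp only:) (rule continuous_on_vec_lambda)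
qed

lemma cdot_ccross_left: "cdot (ccross g u) p = - cdot u (ccross g p)"
  unfolding cdot_3 ccross_def by (simp add: ring_distribs)

definition cross_matrix :: "R3 \<Rightarrow> M3" where
  "cross_matrix g = vector [vector [0, - complex_of_real (g$3), complex_of_real (g$2)],
                            vector [complex_of_real (g$3), 0, - complex_of_real (g$1)],
                            vector [- complex_of_real (g$2), complex_of_real (g$1), 0]]"

lemma cross_matrix_mult: "cross_matrix g *v b = ccross (cvec g) b"
  unfolding vec3_eq_iff cross_matrix_def matrix_vector_mult_def ccross_def cvec_def
  by (simp add: sum_3)

lemma cross_matrix_zero [simp]: "cross_matrix 0 = 0"
  unfolding cross_matrix_def vec3_eq_iff by simp

lemma continuous_on_cross_matrix:
  "continuous_on UNIV g \<Longrightarrow> continuous_on UNIV (\<lambda>x. cross_matrix (g x))"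
  unfolding cross_matrix_def by (intro continuous_on_vector3 continuous_intros)

lemma continuous_on_ccurl: "(\<And>j. continuous_on UNIV (pd F j)) \<Longrightarrow> continuous_on UNIV (ccurl F)"
  unfolding ccurl_def by (intro continuous_on_vector3 continuous_intros)

lemma continuous_on_ccross_cvec:
  "continuous_on UNIV g \<Longrightarrow> continuous_on UNIV \<phi> \<Longrightarrow> continuous_on UNIV (\<lambda>x. ccross (cvec (g x)) (\<phi> x))"
  unfolding ccross_def cvec_def by (intro continuous_on_vector3 continuous_intros)

lemma continuous_on_bounded_support:
  fixes \<psi> :: "R3 \<Rightarrow> 'a::real_normed_vector"
  assumes c: "continuous_on UNIV \<psi>" and s: "\<And>x. norm x \<ge> r \<Longrightarrow> \<psi> x = 0"
  obtains B where "\<And>x. norm (\<psi> x) \<le> B"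
proof -
  obtain B where "\<And>x. norm x \<le> r \<Longrightarrow> norm (\<psi> x) \<le> B"
    using continuous_on_bounded_on_ball[OF c, where r = r] by blast
  hence "norm (\<psi> x) \<le> max B 0" for x
  proof (cases "norm x \<le> r")
    case True
    thus ?thesis using \<open>\<And>x. norm x \<le> r \<Longrightarrow> norm (\<psi> x) \<le> B\<close> by (simp add: le_max_iff_disj)
  next
    case False
    thus ?thesis using s[of x] by simp
  qed
  thus ?thesis by (rule that)
qed

lemma L2on_UNIV_if_support_in_ball:
  assumes "L2on (ball 0 r) F" and "\<And>x. norm x \<ge> r \<Longrightarrow> F x = 0"
  shows "L2on UNIV F"
proof -
  have e1: "indicator UNIV x *\<^sub>R F x = indicator (ball 0 r) x *\<^sub>R F x" for x
    using assms(2)[of x] by (cases "x \<in> ball 0 r") simp_all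
  have e2: "indicator UNIV x * (norm (F x))\<^sup>2 = indicator (ball 0 r) x * (norm (F x))\<^sup>2" for x
    using assms(2)[of x] by (cases "x \<in> ball 0 r") simp_all
  show ?thesis using assms(1) unfolding L2on_def e1 e2 .
qed

lemma L2loc_matrix_vector_mult:
  assumes F: "L2loc F" and c: "continuous_on UNIV M" and b: "\<And>x. norm (M x) \<le> B"
  shows "L2loc (\<lambda>x. (M x :: M3) *v F x)"
  unfolding L2loc_def
proof
  fix r
  have "ball (0::R3) r \<in> sets lebesgue" using lmeasurable_ball fmeasurableD by blast
  hence "(\<lambda>x. indicator (ball 0 r) x *\<^sub>R M x) \<in> borel_measurable lebesgue"
    using continuous_on_imp_borel_measurable_lebesgue[OF c] by measurable
  thus "L2on (ball 0 r) (\<lambda>x. M x *v F x)"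
    using F b unfolding L2loc_def by (intro L2on_matrix_vector_mult[where B = B]) auto
qed

lemma L2loc_add: "L2loc F \<Longrightarrow> L2loc G \<Longrightarrow> L2loc (\<lambda>x. F x + G x)"
  unfolding L2loc_def using L2on_add by blast

lemma integrable_cdot_bounded_support:
  assumes u: "L2loc u" and c: "continuous_on UNIV \<psi>" and s: "\<And>x. norm x \<ge> r \<Longrightarrow> \<psi> x = 0"
  shows "integrable lebesgue (\<lambda>x. cdot (u x) (\<psi> x))"
proof -
  obtain B where B: "\<And>x. norm (\<psi> x) \<le> B" using continuous_on_bounded_support[OF c s] by blast
  have B0: "B \<ge> 0" using B norm_ge_zero order_trans by blast
  define ur where "ur x = indicator (ball 0 r) x *\<^sub>R u x" for x
  have ur: "ur \<in> borel_measurable lebesgue" "integrable lebesgue (\<lambda>x. (norm (ur x))\<^sup>2)"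
    using u unfolding L2loc_def L2on_iff ur_def by auto
  have e: "cdot (u x) (\<psi> x) = cdot (ur x) (\<psi> x)" for x
  proof (cases "norm x \<ge> r")
    case True thus ?thesis using s by (simp add: cdot_def)
  next
    case False thus ?thesis by (simp add: ur_def)
  qed
  show ?thesis unfolding e
  proof (rule Bochner_Integration.integrable_bound)
    show "integrable lebesgue (\<lambda>x. B * (indicator (ball 0 r) x + (norm (ur x))\<^sup>2))"
      using integrable_indicator_ball ur by auto
    show "(\<lambda>x. cdot (ur x) (\<psi> x)) \<in> borel_measurable lebesgue"
      using ur continuous_on_imp_borel_measurable_lebesgue[OF c] by measurable
    have "norm (cdot (ur x) (\<psi> x)) \<le> norm (B * (indicator (ball 0 r) x + (norm (ur x))\<^sup>2))" for x
    proof -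
      have n: "norm (ur x) \<le> indicator (ball 0 r) x + (norm (ur x))\<^sup>2"
      proof (cases "x \<in> ball 0 r")
        case True
        thus ?thesis using True le_one_plus_power2[of "norm (ur x)"] by simp
      qed (simp add: ur_def)
      have "norm (ur x) * norm (\<psi> x) \<le> norm (ur x) * B" using B by (simp add: mult_left_mono)
      hence "norm (cdot (ur x) (\<psi> x)) \<le> norm (ur x) * B"
        using norm_cdot_le[of "ur x" "\<psi> x"] by linarith
      also have "\<dots> \<le> (indicator (ball 0 r) x + (norm (ur x))\<^sup>2) * B" using n B0 by (rule mult_right_mono)
      finally show ?thesis using B0 by (simp add: abs_mult mult.commute)
    qed
    thus "AE x in lebesgue. norm (cdot (ur x) (\<psi> x)) \<le> norm (B * (indicator (ball 0 r) x + (norm (ur x))\<^sup>2))"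
      by simp
  qed
qed

lemma pd_cutoff_scaleR:
  assumes d: "\<And>x. \<phi> differentiable (at x)"
  shows "pd (\<lambda>x. cutoff R x *\<^sub>R \<phi> x) j x = cutoff R x *\<^sub>R pd \<phi> j x + (grad_cutoff R x $ j) *\<^sub>R \<phi> x"
proof -
  have "(\<phi> has_derivative frechet_derivative \<phi> (at x)) (at x)"
    using d frechet_derivative_works by blast
  hence "((\<lambda>x. cutoff R x *\<^sub>R \<phi> x) has_derivative
      (\<lambda>h. cutoff R x *\<^sub>R frechet_derivative \<phi> (at x) h + (grad_cutoff R x \<bullet> h) *\<^sub>R \<phi> x)) (at x)"
    by (rule has_derivative_scaleR[OF cutoff_has_derivative])
  hence "(\<lambda>h. cutoff R x *\<^sub>R frechet_derivative \<phi> (at x) h + (grad_cutoff R x \<bullet> h) *\<^sub>R \<phi> x)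
        = frechet_derivative (\<lambda>x. cutoff R x *\<^sub>R \<phi> x) (at x)" by (rule frechet_derivative_at)
  from fun_cong[OF this, of "axis j 1"] show ?thesis
    unfolding pd_def by (simp add: inner_axis)
qed

lemma ccurl_cutoff_scaleR:
  assumes "\<And>x. \<phi> differentiable (at x)"
  shows "ccurl (\<lambda>x. cutoff R x *\<^sub>R \<phi> x) x = cutoff R x *\<^sub>R ccurl \<phi> x + ccross (cvec (grad_cutoff R x)) (\<phi> x)"
  unfolding ccurl_def pd_cutoff_scaleR[OF assms] vec3_eq_iff
  by (simp add: ccross_def cvec_def scaleR_vec_nth_complex algebra_simps del: vector_scaleR_component)

lemma test_fun_continuous_on: "test_fun \<phi> \<Longrightarrow> continuous_on UNIV \<phi>"
  unfolding test_fun_def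
  by (meson continuous_at_imp_continuous_on differentiable_imp_continuous_within)

lemma test_fun_cutoff_scaleR:
  assumes t: "test_fun \<phi>"
  shows "test_fun (\<lambda>x. cutoff R x *\<^sub>R \<phi> x)"
proof -
  have d: "\<And>x. \<phi> differentiable (at x)" and pc: "\<And>j. continuous_on UNIV (pd \<phi> j)"
    and b: "bounded {x. \<phi> x \<noteq> 0}" using t unfolding test_fun_def by auto
  have "(\<lambda>x. cutoff R x *\<^sub>R \<phi> x) differentiable (at x)" for x
  proof -
    have "(\<phi> has_derivative frechet_derivative \<phi> (at x)) (at x)"
      using d frechet_derivative_works by blast
    thus ?thesis by (rule differentiableI[OF has_derivative_scaleR[OF cutoff_has_derivative]])
  qed
  moreover have "continuous_on UNIV (pd (\<lambda>x. cutoff R x *\<^sub>R \<phi> x) j)" for j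
    unfolding pd_cutoff_scaleR[OF d, abs_def]
    using continuous_on_cutoff continuous_on_grad_cutoff pc test_fun_continuous_on[OF t]
    by (intro continuous_intros) auto
  moreover have "bounded {x. cutoff R x *\<^sub>R \<phi> x \<noteq> 0}" by (rule bounded_subset[OF b]) auto
  ultimately show ?thesis unfolding test_fun_def by blast
qed

text \<open>The product rule \<open>curl (\<chi> u) = \<chi> curl u + \<nabla>\<chi> \<times> u\<close> in the weak sense: test the weak curl
  of \<open>u\<close> against \<open>\<chi> \<phi>\<close>, whose curl is \<open>\<chi> curl \<phi> + \<nabla>\<chi> \<times> \<phi>\<close>.\<close>

lemma weak_curl_cutoff_scaleR:
  assumes R: "R > 0" and H: "Hloc_curl u w" and t: "test_fun \<phi>"
  shows "(\<integral>x. cdot (cutoff R x *\<^sub>R u x) (ccurl \<phi> x) \<partial>lebesgue)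
    = (\<integral>x. cdot (cutoff R x *\<^sub>R w x + ccross (cvec (grad_cutoff R x)) (u x)) (\<phi> x) \<partial>lebesgue)"
proof -
  have uL: "L2loc u" and wL: "L2loc w"
    and weak: "\<And>\<phi>. test_fun \<phi> \<Longrightarrow> (\<integral>x. cdot (u x) (ccurl \<phi> x) \<partial>lebesgue) = (\<integral>x. cdot (w x) (\<phi> x) \<partial>lebesgue)"
    using H unfolding Hloc_curl_def by auto
  define \<psi> where "\<psi> x = cutoff R x *\<^sub>R \<phi> x" for x
  define X where "X x = ccross (cvec (grad_cutoff R x)) (\<phi> x)" for x
  have d: "\<And>x. \<phi> differentiable (at x)" using t unfolding test_fun_def by auto
  have t\<psi>: "test_fun \<psi>" unfolding \<psi>_def by (rule test_fun_cutoff_scaleR[OF t])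
  have ccurl\<psi>: "ccurl \<psi> x = cutoff R x *\<^sub>R ccurl \<phi> x + X x" for x
    unfolding \<psi>_def X_def by (rule ccurl_cutoff_scaleR[OF d])
  have s\<psi>: "\<psi> x = 0" and sX: "X x = 0" and scc: "ccurl \<psi> x = 0" if "norm x \<ge> 2 * R" for x
    using cutoff_outer[OF R that] by (simp_all add: \<psi>_def X_def ccurl\<psi> ccross_def cvec_def vec3_eq_iff)
  have i1: "integrable lebesgue (\<lambda>x. cdot (u x) (ccurl \<psi> x))"
    using t\<psi> unfolding test_fun_def
    by (intro integrable_cdot_bounded_support[OF uL continuous_on_ccurl scc]) auto
  have i2: "integrable lebesgue (\<lambda>x. cdot (u x) (X x))" unfolding X_def
    by (rule integrable_cdot_bounded_support[OF uL continuous_on_ccross_cvec[OF continuous_on_grad_cutoff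
          test_fun_continuous_on[OF t]] sX[unfolded X_def]])
  have i3: "integrable lebesgue (\<lambda>x. cdot (w x) (\<psi> x))"
    by (rule integrable_cdot_bounded_support[OF wL test_fun_continuous_on[OF t\<psi>] s\<psi>])
  have p1: "cdot (cutoff R x *\<^sub>R u x) (ccurl \<phi> x) = cdot (u x) (ccurl \<psi> x) - cdot (u x) (X x)" for x
    unfolding ccurl\<psi> cdot_add_right cdot_scaleR_left cdot_scaleR_right by simp
  have p2: "cdot (cutoff R x *\<^sub>R w x + ccross (cvec (grad_cutoff R x)) (u x)) (\<phi> x)
      = cdot (w x) (\<psi> x) - cdot (u x) (X x)" for x
    unfolding \<psi>_def X_def cdot_add_left cdot_scaleR_left cdot_scaleR_right cdot_ccross_left by simp
  have "(\<integral>x. cdot (cutoff R x *\<^sub>R u x) (ccurl \<phi> x) \<partial>lebesgue)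
      = (\<integral>x. cdot (u x) (ccurl \<psi> x) \<partial>lebesgue) - (\<integral>x. cdot (u x) (X x) \<partial>lebesgue)"
    unfolding p1 by (rule Bochner_Integration.integral_diff[OF i1 i2])
  also have "\<dots> = (\<integral>x. cdot (w x) (\<psi> x) \<partial>lebesgue) - (\<integral>x. cdot (u x) (X x) \<partial>lebesgue)"
    using weak[OF t\<psi>] by simp
  also have "\<dots> = (\<integral>x. cdot (cutoff R x *\<^sub>R w x + ccross (cvec (grad_cutoff R x)) (u x)) (\<phi> x) \<partial>lebesgue)"
    unfolding p2 by (rule Bochner_Integration.integral_diff[OF i3 i2, symmetric])
  finally show ?thesis .
qed

lemma Hcurl_cs_cutoff:
  assumes R: "R > 0" and H: "Hloc_curl u w"
  shows "Hcurl_cs (\<lambda>x. cutoff R x *\<^sub>R u x) (\<lambda>x. cutoff R x *\<^sub>R w x + ccross (cvec (grad_cutoff R x)) (u x))"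
proof -
  have uL: "L2loc u" and wL: "L2loc w" using H unfolding Hloc_curl_def by auto
  define v where "v x = cutoff R x *\<^sub>R u x" for x
  define cv where "cv x = cutoff R x *\<^sub>R w x + ccross (cvec (grad_cutoff R x)) (u x)" for x
  have supp: "cutoff R x = 0" "grad_cutoff R x = 0" if "norm x \<ge> 2 * R" for x
    using cutoff_outer[OF R that] by auto
  have cM1: "continuous_on UNIV (\<lambda>x. cutoff R x *\<^sub>R (mat 1 :: M3))"
    using continuous_on_cutoff by (intro continuous_intros) auto
  have cM2: "continuous_on UNIV (\<lambda>x. cross_matrix (grad_cutoff R x))"
    by (rule continuous_on_cross_matrix[OF continuous_on_grad_cutoff])
  have "cutoff R x *\<^sub>R (mat 1 :: M3) = 0" "cross_matrix (grad_cutoff R x) = 0" if "norm x \<ge> 2 * R" for x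
    using supp[OF that] by simp_all
  then obtain B1 B2 where B1: "\<And>x. norm (cutoff R x *\<^sub>R (mat 1 :: M3)) \<le> B1"
    and B2: "\<And>x. norm (cross_matrix (grad_cutoff R x)) \<le> B2"
    using continuous_on_bounded_support[OF cM1] continuous_on_bounded_support[OF cM2] by metis
  have "v = (\<lambda>x. (cutoff R x *\<^sub>R mat 1) *v u x)"
    unfolding v_def scaleR_matrix_vector_mult_left by simp
  hence vL: "L2loc v" using L2loc_matrix_vector_mult[OF uL cM1 B1] by simp
  have "cv = (\<lambda>x. (cutoff R x *\<^sub>R mat 1) *v w x + cross_matrix (grad_cutoff R x) *v u x)"
    unfolding cv_def scaleR_matrix_vector_mult_left cross_matrix_mult by simp
  hence cvL: "L2loc cv"
    using L2loc_add[OF L2loc_matrix_vector_mult[OF wL cM1 B1] L2loc_matrix_vector_mult[OF uL cM2 B2]]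
    by simp
  have vs: "v x = 0" and cvs: "cv x = 0" if "norm x \<ge> 2 * R" for x
    using supp[OF that] by (simp_all add: v_def cv_def ccross_def cvec_def vec3_eq_iff)
  have "L2on UNIV v" "L2on UNIV cv"
    using vL cvL vs cvs unfolding L2loc_def
    by (intro L2on_UNIV_if_support_in_ball[of "2 * R"]; simp)+
  moreover have "\<exists>R'. AE x in lebesgue. R' < norm x \<longrightarrow> v x = 0"
    using vs by (intro exI[of _ "2 * R"] AE_I2) auto
  moreover have "(\<integral>x. cdot (v x) (ccurl \<phi> x) \<partial>lebesgue) = (\<integral>x. cdot (cv x) (\<phi> x) \<partial>lebesgue)"
    if "test_fun \<phi>" for \<phi>
    unfolding v_def cv_def by (rule weak_curl_cutoff_scaleR[OF R H that])
  ultimately have "Hcurl_cs v cv" using vL cvL unfolding Hcurl_cs_def Hloc_curl_def by blast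
  thus ?thesis unfolding v_def[abs_def] cv_def[abs_def] .
qed

section \<open>The sign of the energy pairing\<close>

lemma cdot_vcnj_ccross_scaleR:
  "cdot w (vcnj (ccross (cvec (c *\<^sub>R y)) u)) = complex_of_real c * cdot (ccross w (cvec y)) (vcnj u)"
  unfolding cdot_3 ccross_def cvec_def vcnj_def by (simp add: algebra_simps)

lemma Im_cutoff_energy_density:
  "Im (cdot (w x) (vcnj (cutoff R x *\<^sub>R w x + ccross (cvec (grad_cutoff R x)) (u x)))
       - complex_of_real (k\<^sup>2) * cdot (u x) (vcnj (cutoff R x *\<^sub>R u x)))
   = Im (cdot (w x) (vcnj (ccross (cvec (grad_cutoff R x)) (u x))))"
  unfolding vcnj_add vcnj_scaleR cdot_add_right cdot_scaleR_right cdot_vcnj_self by simp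

text \<open>Where \<open>\<nabla>\<chi>\<^sub>R \<noteq> 0\<close>, i.e. for \<open>R < |x| < 2R\<close>, the density is \<open>c Im ((w \<times> x/|x|) \<cdot> conj u)\<close>
  with \<open>-4/R \<le> c \<le> 0\<close>, and \<open>w \<times> x/|x| = i k u + O(|x|\<^sup>-\<^sup>2)\<close> makes \<open>Im ((w \<times> x/|x|) \<cdot> conj u)\<close>
  almost nonnegative.\<close>

lemma Im_cutoff_energy_density_le:
  assumes k: "k > 0" and R: "R > 0" and RR0: "R0 \<le> R"
    and sm: "R0 \<le> norm x \<longrightarrow>
      norm (ccross (w x) (cvec (x /\<^sub>R norm x)) - (\<i> * complex_of_real k) *s u x) \<le> C / (norm x)\<^sup>2"
  shows "Im (cdot (w x) (vcnj (cutoff R x *\<^sub>R w x + ccross (cvec (grad_cutoff R x)) (u x)))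
       - complex_of_real (k\<^sup>2) * cdot (u x) (vcnj (cutoff R x *\<^sub>R u x)))
     \<le> (2 * C\<^sup>2 / (k * R ^ 5)) * indicator (ball 0 (2 * R)) x"
proof -
  obtain c where c: "c \<le> 0" "\<bar>c\<bar> \<le> 4 / R" "grad_cutoff R x = c *\<^sub>R (x /\<^sub>R norm x)"
    using grad_cutoff_radial[OF R] by blast
  define A where "A = ccross (w x) (cvec (x /\<^sub>R norm x))"
  define N where "N = norm (A - (\<i> * complex_of_real k) *s u x)"
  have e: "Im (cdot (w x) (vcnj (cutoff R x *\<^sub>R w x + ccross (cvec (grad_cutoff R x)) (u x)))
       - complex_of_real (k\<^sup>2) * cdot (u x) (vcnj (cutoff R x *\<^sub>R u x))) = c * Im (cdot A (vcnj (u x)))"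
    unfolding Im_cutoff_energy_density unfolding c(3) cdot_vcnj_ccross_scaleR A_def by simp
  show ?thesis
  proof (cases "R < norm x \<and> norm x < 2 * R")
    case False
    hence "grad_cutoff R x = 0" using cutoff_inner[of x R] cutoff_outer[OF R, of x] by fastforce
    hence "Im (cdot (w x) (vcnj (cutoff R x *\<^sub>R w x + ccross (cvec (grad_cutoff R x)) (u x)))
       - complex_of_real (k\<^sup>2) * cdot (u x) (vcnj (cutoff R x *\<^sub>R u x))) = 0"
      unfolding Im_cutoff_energy_density by (simp add: ccross_def cvec_def cdot_3 vcnj_def)
    thus ?thesis using k R by simp
  next
    case True
    hence ind: "indicator (ball 0 (2 * R)) x = (1::real)" by simp
    have "norm x > 0" using True R by linarith
    hence nx: "(norm x)\<^sup>2 > 0" by simp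
    have N1: "N \<le> C / (norm x)\<^sup>2" using sm RR0 True unfolding N_def A_def by simp
    hence "0 \<le> C / (norm x)\<^sup>2" using norm_ge_zero order_trans unfolding N_def by blast
    hence "C \<ge> 0" using nx by (simp add: zero_le_divide_iff)
    hence "C / (norm x)\<^sup>2 \<le> C / R\<^sup>2" using R True nx by (intro divide_left_mono power_mono) auto
    hence N2: "N\<^sup>2 \<le> (C / R\<^sup>2)\<^sup>2" using N1 unfolding N_def by (intro power_mono) auto
    have "Im (cdot A (vcnj (u x))) \<ge> - N\<^sup>2 / (2 * k)" unfolding N_def by (rule Im_cdot_vcnj_ge[OF k])
    hence "c * Im (cdot A (vcnj (u x))) \<le> (- c) * (N\<^sup>2 / (2 * k))"
      using mult_left_mono_neg[OF _ c(1)] by fastforce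
    also have "\<dots> \<le> (4 / R) * ((C / R\<^sup>2)\<^sup>2 / (2 * k))"
      using c N2 k R by (intro mult_mono divide_right_mono) auto
    also have "\<dots> = 2 * C\<^sup>2 / (k * R ^ 5)"
      using R k by (simp add: field_simps power2_eq_square power_numeral_reduce)
    finally show ?thesis unfolding e ind by simp
  qed
qed

lemma integral_indicator_ball:
  "r \<ge> 0 \<Longrightarrow> (\<integral>x. indicator (ball (0::R3) r) x \<partial>lebesgue) = 4 / 3 * r ^ 3 * pi"
  using sphere_volume[of r "0::R3"] by simp

text \<open>Test the variational equation with \<open>\<chi>\<^sub>R u\<close>, where \<open>\<chi>\<^sub>R = 1\<close> on \<open>\<Omega>\<close>: the pairing becomes the
  energy integral of the previous lemma, whose imaginary part is at most
  \<open>O(R\<^sup>-\<^sup>5) \<cdot> |B\<^sub>2\<^sub>R| = O(R\<^sup>-\<^sup>2)\<close>.\<close>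

lemma Im_pairing_with_solution_le:
  fixes k :: real and \<Omega> :: "R3 set"
  assumes k: "k > 0" and R: "R > 0" and \<Omega>R: "\<Omega> \<subseteq> cball 0 R" and \<Omega>s: "\<Omega> \<in> sets lebesgue"
    and sol: "solves k \<Omega> eps mu xi zeta f g u w" and RR0: "R0 \<le> R"
    and sm: "AE x in lebesgue. R0 \<le> norm x \<longrightarrow>
      norm (ccross (w x) (cvec (x /\<^sub>R norm x)) - (\<i> * complex_of_real k) *s u x) \<le> C / (norm x)\<^sup>2"
  shows "Im (LINT x:\<Omega>|lebesgue. cdot (T1 k eps mu xi zeta f g u w x) (vcnj (u x))
                              + cdot (T2 k eps mu xi zeta f g u w x) (vcnj (w x)))
    \<le> 64 / 3 * pi * C\<^sup>2 / (k * R\<^sup>2)"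
proof -
  define v where "v x = cutoff R x *\<^sub>R u x" for x
  define cv where "cv x = cutoff R x *\<^sub>R w x + ccross (cvec (grad_cutoff R x)) (u x)" for x
  define Kb where "Kb = 2 * C\<^sup>2 / (k * R ^ 5)"
  have "Hcurl_cs v cv"
    unfolding v_def[abs_def] cv_def[abs_def] using sol unfolding solves_def
    by (blast intro: Hcurl_cs_cutoff[OF R])
  hence "(\<integral>x. cdot (w x) (vcnj (cv x)) - complex_of_real (k\<^sup>2) * cdot (u x) (vcnj (v x)) \<partial>lebesgue)
      = (LINT x:\<Omega>|lebesgue. cdot (T1 k eps mu xi zeta f g u w x) (vcnj (v x))
                           + cdot (T2 k eps mu xi zeta f g u w x) (vcnj (cv x)))"
    using sol unfolding solves_def by blast
  also have "\<dots> = (LINT x:\<Omega>|lebesgue. cdot (T1 k eps mu xi zeta f g u w x) (vcnj (u x))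
                              + cdot (T2 k eps mu xi zeta f g u w x) (vcnj (w x)))"
  proof (rule set_lebesgue_integral_cong[OF \<Omega>s], intro allI impI)
    fix x assume "x \<in> \<Omega>"
    hence "v x = u x" "cv x = w x"
      using \<Omega>R cutoff_inner[of x R] unfolding v_def cv_def
      by (auto simp: ccross_def cvec_def vec3_eq_iff)
    thus "cdot (T1 k eps mu xi zeta f g u w x) (vcnj (v x)) + cdot (T2 k eps mu xi zeta f g u w x) (vcnj (cv x))
        = cdot (T1 k eps mu xi zeta f g u w x) (vcnj (u x)) + cdot (T2 k eps mu xi zeta f g u w x) (vcnj (w x))"
      by simp
  qed
  finally have Z: "(LINT x:\<Omega>|lebesgue. cdot (T1 k eps mu xi zeta f g u w x) (vcnj (u x))
                              + cdot (T2 k eps mu xi zeta f g u w x) (vcnj (w x)))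
    = (\<integral>x. cdot (w x) (vcnj (cv x)) - complex_of_real (k\<^sup>2) * cdot (u x) (vcnj (v x)) \<partial>lebesgue)" ..
  have bound: "Kb * (4 / 3 * (2 * R) ^ 3 * pi) = 64 / 3 * pi * C\<^sup>2 / (k * R\<^sup>2)"
    unfolding Kb_def using R k by (simp add: field_simps power2_eq_square power_numeral_reduce)
  show ?thesis
  proof (cases "integrable lebesgue (\<lambda>x. cdot (w x) (vcnj (cv x)) - complex_of_real (k\<^sup>2) * cdot (u x) (vcnj (v x)))")
    case False
    thus ?thesis unfolding Z using k by (simp add: not_integrable_integral_eq)
  next
    case True
    have "Im (\<integral>x. cdot (w x) (vcnj (cv x)) - complex_of_real (k\<^sup>2) * cdot (u x) (vcnj (v x)) \<partial>lebesgue)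
      = (\<integral>x. Im (cdot (w x) (vcnj (cv x)) - complex_of_real (k\<^sup>2) * cdot (u x) (vcnj (v x))) \<partial>lebesgue)"
      using integral_bounded_linear[OF bounded_linear_Im True] by simp
    also have "\<dots> \<le> (\<integral>x. Kb * indicator (ball (0::R3) (2 * R)) x \<partial>lebesgue)"
    proof (rule integral_mono_AE)
      show "integrable lebesgue (\<lambda>x. Im (cdot (w x) (vcnj (cv x)) - complex_of_real (k\<^sup>2) * cdot (u x) (vcnj (v x))))"
        by (rule integrable_Im[OF True])
      show "integrable lebesgue (\<lambda>x::R3. Kb * indicator (ball 0 (2 * R)) x)"
        using integrable_indicator_ball by simp
      show "AE x in lebesgue. Im (cdot (w x) (vcnj (cv x)) - complex_of_real (k\<^sup>2) * cdot (u x) (vcnj (v x)))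
            \<le> Kb * indicator (ball 0 (2 * R)) x"
        using sm
      proof eventually_elim
        case (elim x)
        show ?case unfolding v_def cv_def Kb_def
          by (rule Im_cutoff_energy_density_le[where w = w and u = u and x = x, OF k R RR0 elim])
      qed
    qed
    also have "\<dots> = Kb * (4 / 3 * (2 * R) ^ 3 * pi)"
      unfolding integral_mult_right_zero using R by (subst integral_indicator_ball) auto
    finally show ?thesis unfolding Z bound .
  qed
qed

lemma Im_pairing_with_solution_nonpos:
  fixes k :: real and \<Omega> :: "R3 set"
  assumes k: "k > 0" and \<Omega>r: "\<Omega> \<subseteq> ball 0 r0" and \<Omega>s: "\<Omega> \<in> sets lebesgue"
    and sol: "solves k \<Omega> eps mu xi zeta f g u w"
  shows "Im (LINT x:\<Omega>|lebesgue. cdot (T1 k eps mu xi zeta f g u w x) (vcnj (u x))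
                              + cdot (T2 k eps mu xi zeta f g u w x) (vcnj (w x))) \<le> 0"
proof (rule field_le_epsilon)
  fix e :: real assume e: "e > 0"
  obtain R0 C where sm: "AE x in lebesgue. R0 \<le> norm x \<longrightarrow>
      norm (ccross (w x) (cvec (x /\<^sub>R norm x)) - (\<i> * complex_of_real k) *s u x) \<le> C / (norm x)\<^sup>2"
    using sol unfolding solves_def silver_mueller_def by blast
  define K where "K = 64 / 3 * pi * C\<^sup>2 / k"
  have K0: "K \<ge> 0" unfolding K_def using k by simp
  define R where "R = max (max r0 R0) 1 + K / e"
  have R1: "R \<ge> 1" and Rr0: "R \<ge> r0" and RR0: "R \<ge> R0" and RK: "R \<ge> K / e"
    unfolding R_def using K0 e by (auto intro: add_increasing2 divide_nonneg_pos)
  have "\<Omega> \<subseteq> cball 0 R" using \<Omega>r Rr0 by (auto simp: subset_iff)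
  hence "Im (LINT x:\<Omega>|lebesgue. cdot (T1 k eps mu xi zeta f g u w x) (vcnj (u x))
                              + cdot (T2 k eps mu xi zeta f g u w x) (vcnj (w x))) \<le> K / R\<^sup>2"
    using Im_pairing_with_solution_le[OF k _ _ \<Omega>s sol RR0 sm] R1 unfolding K_def by simp
  also have "\<dots> \<le> K / R" using K0 R1 by (intro divide_left_mono) (auto simp: power2_eq_square)
  also have "\<dots> \<le> e" using RK e R1 K0 by (simp add: pos_divide_le_eq mult.commute)
  finally show "Im (LINT x:\<Omega>|lebesgue. cdot (T1 k eps mu xi zeta f g u w x) (vcnj (u x))
                              + cdot (T2 k eps mu xi zeta f g u w x) (vcnj (w x))) \<le> 0 + e" by simp
qed

section \<open>Herglotz wave functions are smooth\<close>

definition sph_point :: "real \<times> real \<Rightarrow> R3" where "sph_point p = sdir (fst p) (snd p)"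

definition sph_density :: "(R3 \<Rightarrow> C3) \<Rightarrow> real \<times> real \<Rightarrow> C3" where
  "sph_density h p = indicator sph_param p *\<^sub>R h (sph_point p)"

definition sph_weight :: "(R3 \<Rightarrow> C3) \<Rightarrow> real \<times> real \<Rightarrow> real" where
  "sph_weight h p = sin (fst p) * norm (sph_density h p)"

definition plane_wave :: "real \<Rightarrow> R3 \<Rightarrow> real \<times> real \<Rightarrow> complex" where
  "plane_wave k x p = exp (\<i> * complex_of_real (k * (x \<bullet> sph_point p)))"

text \<open>The Herglotz integral with an extra factor \<open>a\<close> in the integrand: \<open>a = 1\<close> gives \<open>H\<^sub>1 h\<close>,
  and \<open>a = i k d\<^sub>j\<close> gives its \<open>j\<close>-th partial derivative.\<close>

definition herglotz_weighted :: "real \<Rightarrow> (R3 \<Rightarrow> C3) \<Rightarrow> (real \<times> real \<Rightarrow> complex) \<Rightarrow> R3 \<Rightarrow> C3" where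
  "herglotz_weighted k h a x = (\<integral>p. sin (fst p) *\<^sub>R ((a p * plane_wave k x p) *s sph_density h p) \<partial>lebesgue)"

lemma sph_param_eq_cbox: "sph_param = cbox (0, 0) (pi, 2 * pi)"
  unfolding sph_param_def cbox_Pair_eq by simp

lemma sph_param_lmeasurable: "sph_param \<in> sets lebesgue" "emeasure lebesgue sph_param < \<infinity>"
  using lmeasurable_cbox[of "(0::real, 0::real)" "(pi, 2 * pi)"]
  unfolding sph_param_eq_cbox fmeasurable_def by blast+

lemma norm_sdir: "norm (sdir a b) = 1"
proof -
  have "(norm (sdir a b))\<^sup>2 = (sin a * cos b)\<^sup>2 + (sin a * sin b)\<^sup>2 + (cos a)\<^sup>2"
    unfolding norm_vec_def L2_set_def sdir_def by (simp add: sum_3)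
  also have "\<dots> = (sin a)\<^sup>2 * ((sin b)\<^sup>2 + (cos b)\<^sup>2) + (cos a)\<^sup>2"
    by (simp only: power_mult_distrib distrib_left add_ac mult_ac)
  also have "\<dots> = 1" by (simp only: sin_cos_squared_add mult_1_right)
  finally show ?thesis using norm_ge_zero[of "sdir a b"] by (simp add: power2_eq_1_iff)
qed

lemma continuous_on_sph_point: "continuous_on UNIV sph_point"
  unfolding sph_point_def sdir_def by (intro continuous_on_vector3 continuous_intros)

lemma continuous_on_plane_wave: "continuous_on UNIV (plane_wave k x)"
  unfolding plane_wave_def by (intro continuous_intros continuous_on_compose2[OF continuous_on_sph_point]) auto

lemma borel_measurable_sph_density: "L2t h \<Longrightarrow> sph_density h \<in> borel_measurable lebesgue"
  unfolding L2t_def sph_density_def sph_point_def by auto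

lemma abs_sin_mult_norm_sph_density: "\<bar>sin (fst p)\<bar> * norm (sph_density h p) = sph_weight h p"
proof (cases "p \<in> sph_param")
  case True
  hence "sin (fst p) \<ge> 0" unfolding sph_param_def by (auto intro!: sin_ge_zero)
  thus ?thesis unfolding sph_weight_def by simp
qed (simp add: sph_density_def sph_weight_def)

lemma sph_weight_nonneg: "sph_weight h p \<ge> 0"
  using abs_sin_mult_norm_sph_density[of p h] by (metis abs_ge_zero mult_nonneg_nonneg norm_ge_zero)

lemma integrable_sph_weight:
  assumes "L2t h"
  shows "integrable lebesgue (sph_weight h)"
proof -
  have m: "sph_density h \<in> borel_measurable lebesgue" by (rule borel_measurable_sph_density[OF assms])
  have ms: "(\<lambda>p::real\<times>real. sin (fst p)) \<in> borel_measurable lebesgue"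
    by (rule continuous_on_imp_borel_measurable_lebesgue) (intro continuous_intros)
  have i2: "integrable lebesgue (\<lambda>p. sin (fst p) * (norm (sph_density h p))\<^sup>2)"
    unfolding integrable_iff_bounded
  proof
    show "(\<lambda>p. sin (fst p) * (norm (sph_density h p))\<^sup>2) \<in> borel_measurable lebesgue" using m ms by measurable
    have "(\<integral>\<^sup>+ p. ennreal (norm (sin (fst p) * (norm (sph_density h p))\<^sup>2)) \<partial>lebesgue)
       = (\<integral>\<^sup>+ p. ennreal (indicator sph_param p * sin (fst p) * (norm (h (sdir (fst p) (snd p))))^2) \<partial>lebesgue)"
    proof (intro nn_integral_cong)
      fix p
      show "ennreal (norm (sin (fst p) * (norm (sph_density h p))\<^sup>2)) =
            ennreal (indicator sph_param p * sin (fst p) * (norm (h (sdir (fst p) (snd p))))^2)"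
      proof (cases "p \<in> sph_param")
        case True
        hence "sin (fst p) \<ge> 0" unfolding sph_param_def by (auto intro!: sin_ge_zero)
        thus ?thesis using True by (simp add: sph_density_def sph_point_def abs_mult)
      qed (simp add: sph_density_def)
    qed
    also have "\<dots> < \<infinity>" using assms unfolding L2t_def by blast
    finally show "(\<integral>\<^sup>+ p. ennreal (norm (sin (fst p) * (norm (sph_density h p))\<^sup>2)) \<partial>lebesgue) < \<infinity>" .
  qed
  have i1: "integrable lebesgue (indicator sph_param :: real\<times>real \<Rightarrow> real)"
    using sph_param_lmeasurable by (rule integrable_real_indicator)
  show ?thesis
  proof (rule Bochner_Integration.integrable_bound)
    show "integrable lebesgue (\<lambda>p. indicator sph_param p + sin (fst p) * (norm (sph_density h p))\<^sup>2)" using i1 i2 by auto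
    show "sph_weight h \<in> borel_measurable lebesgue" unfolding sph_weight_def using m ms by measurable
    show "AE p in lebesgue. norm (sph_weight h p) \<le> norm (indicator sph_param p + sin (fst p) * (norm (sph_density h p))\<^sup>2)"
    proof (rule AE_I2)
      fix p
      show "norm (sph_weight h p) \<le> norm (indicator sph_param p + sin (fst p) * (norm (sph_density h p))\<^sup>2)"
      proof (cases "p \<in> sph_param")
        case True
        have s0: "sin (fst p) \<ge> 0" "sin (fst p) \<le> 1" using True unfolding sph_param_def by (auto intro!: sin_ge_zero)
        define n where "n = norm (sph_density h p)"
        have n0: "n \<ge> 0" unfolding n_def by simp
        have "n \<le> 1 + n\<^sup>2" by (rule le_one_plus_power2)
        hence "sin (fst p) * n \<le> sin (fst p) * (1 + n\<^sup>2)" using s0 by (intro mult_left_mono) auto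
        also have "\<dots> \<le> 1 + sin (fst p) * n\<^sup>2" using s0 by (simp add: distrib_left)
        finally have "sin (fst p) * n \<le> 1 + sin (fst p) * n\<^sup>2" .
        moreover have "sin (fst p) * n \<ge> 0" "sin (fst p) * n\<^sup>2 \<ge> 0" using s0 n0 by auto
        ultimately show ?thesis using True unfolding sph_weight_def n_def by simp
      qed (simp add: sph_weight_def sph_density_def)
    qed
  qed
qed

lemma borel_measurable_herglotz_integrand:
  assumes "L2t h" "continuous_on UNIV a"
  shows "(\<lambda>p. sin (fst p) *\<^sub>R ((a p * plane_wave k x p) *s sph_density h p)) \<in> borel_measurable lebesgue"
proof -
  have m: "sph_density h \<in> borel_measurable lebesgue" by (rule borel_measurable_sph_density[OF assms(1)])
  have ms: "(\<lambda>p::real\<times>real. sin (fst p)) \<in> borel_measurable lebesgue"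
    by (rule continuous_on_imp_borel_measurable_lebesgue) (intro continuous_intros)
  have ma: "a \<in> borel_measurable lebesgue" by (rule continuous_on_imp_borel_measurable_lebesgue[OF assms(2)])
  have me: "plane_wave k x \<in> borel_measurable lebesgue" by (rule continuous_on_imp_borel_measurable_lebesgue[OF continuous_on_plane_wave])
  show ?thesis using m ms ma me by measurable
qed

lemma norm_herglotz_integrand:
  "norm (sin (fst p) *\<^sub>R ((a p * plane_wave k x p) *s sph_density h p)) = cmod (a p) * sph_weight h p"
  unfolding norm_scaleR norm_scalar_mult_vec3 norm_mult plane_wave_def abs_sin_mult_norm_sph_density[symmetric]
  by (simp add: mult_ac)

lemma integrable_herglotz_integrand:
  assumes "L2t h" "continuous_on UNIV a" "\<And>p. cmod (a p) \<le> A"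
  shows "integrable lebesgue (\<lambda>p. sin (fst p) *\<^sub>R ((a p * plane_wave k x p) *s sph_density h p))"
proof (rule Bochner_Integration.integrable_bound)
  show "integrable lebesgue (\<lambda>p. A * sph_weight h p)" using integrable_sph_weight[OF assms(1)] by auto
  show "(\<lambda>p. sin (fst p) *\<^sub>R ((a p * plane_wave k x p) *s sph_density h p)) \<in> borel_measurable lebesgue"
    by (rule borel_measurable_herglotz_integrand[OF assms(1,2)])
  show "AE p in lebesgue. norm (sin (fst p) *\<^sub>R ((a p * plane_wave k x p) *s sph_density h p)) \<le> norm (A * sph_weight h p)"
  proof (rule AE_I2)
    fix p
    have "cmod (a p) * sph_weight h p \<le> A * sph_weight h p" using assms(3) sph_weight_nonneg by (rule mult_right_mono)
    thus "norm (sin (fst p) *\<^sub>R ((a p * plane_wave k x p) *s sph_density h p)) \<le> norm (A * sph_weight h p)"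
      unfolding norm_herglotz_integrand by (simp add: sph_weight_nonneg)
  qed
qed

lemma norm_iexp_diff_le: "cmod (exp (\<i> * complex_of_real s) - exp (\<i> * complex_of_real t)) \<le> \<bar>s - t\<bar>"
proof -
  have "exp (\<i> * complex_of_real s) - exp (\<i> * complex_of_real t)
      = exp (\<i> * complex_of_real t) * (iexp (s - t) - 1)"
    by (simp add: algebra_simps exp_add[symmetric])
  hence "cmod (exp (\<i> * complex_of_real s) - exp (\<i> * complex_of_real t)) = cmod (iexp (s - t) - 1)"
    by (simp add: norm_mult)
  also have "\<dots> \<le> \<bar>s - t\<bar>" using iexp_approx1[of "s - t" 0] by simp
  finally show ?thesis .
qed

lemma norm_plane_wave_diff_le: "k \<ge> 0 \<Longrightarrow> cmod (plane_wave k x p - plane_wave k y p) \<le> k * norm (x - y)"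
proof -
  assume k: "k \<ge> 0"
  have "cmod (plane_wave k x p - plane_wave k y p) \<le> \<bar>k * (x \<bullet> sph_point p) - k * (y \<bullet> sph_point p)\<bar>"
    unfolding plane_wave_def by (rule norm_iexp_diff_le)
  also have "\<dots> = k * \<bar>(x - y) \<bullet> sph_point p\<bar>" using k by (simp add: inner_diff_left right_diff_distrib[symmetric] abs_mult)
  also have "\<dots> \<le> k * (norm (x - y) * norm (sph_point p))" using k by (intro mult_left_mono Cauchy_Schwarz_ineq2) auto
  also have "\<dots> = k * norm (x - y)" by (simp add: sph_point_def norm_sdir)
  finally show ?thesis .
qed

lemma herglotz_weighted_lipschitz:
  assumes h: "L2t h" and c: "continuous_on UNIV a" and A: "\<And>p. cmod (a p) \<le> A" and k: "k \<ge> 0"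
  shows "norm (herglotz_weighted k h a x - herglotz_weighted k h a y) \<le> (A * k * integral\<^sup>L lebesgue (sph_weight h)) * norm (x - y)"
proof -
  have ix: "integrable lebesgue (\<lambda>p. sin (fst p) *\<^sub>R ((a p * plane_wave k x p) *s sph_density h p))" by (rule integrable_herglotz_integrand[OF h c A])
  have iy: "integrable lebesgue (\<lambda>p. sin (fst p) *\<^sub>R ((a p * plane_wave k y p) *s sph_density h p))" by (rule integrable_herglotz_integrand[OF h c A])
  have "herglotz_weighted k h a x - herglotz_weighted k h a y = (\<integral>p. sin (fst p) *\<^sub>R ((a p * plane_wave k x p) *s sph_density h p)
                                       - sin (fst p) *\<^sub>R ((a p * plane_wave k y p) *s sph_density h p) \<partial>lebesgue)"
    unfolding herglotz_weighted_def by (rule Bochner_Integration.integral_diff[OF ix iy, symmetric])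
  also have "norm \<dots> \<le> (\<integral>p. (A * k * norm (x - y)) * sph_weight h p \<partial>lebesgue)"
  proof (rule Bochner_Integration.integral_norm_bound_integral)
    show "integrable lebesgue (\<lambda>p. sin (fst p) *\<^sub>R ((a p * plane_wave k x p) *s sph_density h p)
                                       - sin (fst p) *\<^sub>R ((a p * plane_wave k y p) *s sph_density h p))" using ix iy by auto
    show "integrable lebesgue (\<lambda>p. (A * k * norm (x - y)) * sph_weight h p)" using integrable_sph_weight[OF h] by auto
    fix p
    have e: "sin (fst p) *\<^sub>R ((a p * plane_wave k x p) *s sph_density h p) - sin (fst p) *\<^sub>R ((a p * plane_wave k y p) *s sph_density h p)
        = sin (fst p) *\<^sub>R ((a p * (plane_wave k x p - plane_wave k y p)) *s sph_density h p)"
      by (simp add: vec_eq_iff vector_scalar_mult_def scaleR_vec_nth_complex algebra_simps del: vector_scaleR_component)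
    have A0: "A \<ge> 0" using A[of p] norm_ge_zero order_trans by blast
    have "cmod (a p * (plane_wave k x p - plane_wave k y p)) \<le> A * (k * norm (x - y))"
      unfolding norm_mult using A norm_plane_wave_diff_le[OF k] A0 by (intro mult_mono) auto
    hence "cmod (a p * (plane_wave k x p - plane_wave k y p)) * sph_weight h p \<le> A * (k * norm (x - y)) * sph_weight h p"
      using sph_weight_nonneg by (rule mult_right_mono)
    thus "norm (sin (fst p) *\<^sub>R ((a p * plane_wave k x p) *s sph_density h p) - sin (fst p) *\<^sub>R ((a p * plane_wave k y p) *s sph_density h p))
          \<le> (A * k * norm (x - y)) * sph_weight h p"
      unfolding e norm_scaleR norm_scalar_mult_vec3 abs_sin_mult_norm_sph_density[symmetric] by (simp add: mult_ac)
  qed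
  also have "\<dots> = (A * k * integral\<^sup>L lebesgue (sph_weight h)) * norm (x - y)" by simp
  finally show ?thesis .
qed

lemma continuous_on_herglotz_weighted:
  assumes h: "L2t h" and c: "continuous_on UNIV a" and A: "\<And>p. cmod (a p) \<le> A" and k: "k \<ge> 0"
  shows "continuous_on UNIV (herglotz_weighted k h a)"
proof -
  define L where "L = A * k * integral\<^sup>L lebesgue (sph_weight h)"
  have "\<forall>x y. dist (herglotz_weighted k h a x) (herglotz_weighted k h a y) \<le> L * dist x y"
    unfolding dist_norm L_def using herglotz_weighted_lipschitz[OF h c A k] by blast
  hence "lipschitz_on (max L 0) UNIV (herglotz_weighted k h a)"
  proof (intro lipschitz_onI)
    fix x y assume "\<forall>x y. dist (herglotz_weighted k h a x) (herglotz_weighted k h a y) \<le> L * dist x y"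
    hence "dist (herglotz_weighted k h a x) (herglotz_weighted k h a y) \<le> L * dist x y" by blast
    also have "L * dist x y \<le> max L 0 * dist x y" by (rule mult_right_mono) auto
    finally show "dist (herglotz_weighted k h a x) (herglotz_weighted k h a y) \<le> max L 0 * dist x y" .
  qed auto
  thus ?thesis by (rule lipschitz_on_continuous_on)
qed

definition herglotz_dcoeff :: "real \<Rightarrow> 3 \<Rightarrow> real \<times> real \<Rightarrow> complex" where
  "herglotz_dcoeff k j p = \<i> * complex_of_real k * complex_of_real (sph_point p $ j)"

lemma herglotz1_eq_herglotz_weighted: "herglotz1 k h = herglotz_weighted k h (\<lambda>_. 1)"
proof
  fix x
  have "(indicator sph_param p * sin (fst p)) *\<^sub>R
          (exp (\<i> * complex_of_real (k * (x \<bullet> sdir (fst p) (snd p)))) *s h (sdir (fst p) (snd p)))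
        = sin (fst p) *\<^sub>R ((1 * plane_wave k x p) *s sph_density h p)" for p
    unfolding vec_eq_iff sph_density_def plane_wave_def sph_point_def
    by (simp add: scaleR_vec_nth_complex vector_scalar_mult_def mult_ac del: vector_scaleR_component)
  thus "herglotz1 k h x = herglotz_weighted k h (\<lambda>_. 1) x" unfolding herglotz1_def herglotz_weighted_def by simp
qed

lemma scaleR_scalar_mult_combination:
  "s *\<^sub>R (\<alpha> *s (P::C3)) - s *\<^sub>R (\<beta> *s P) - (\<Sum>j\<in>UNIV. r j *\<^sub>R (s *\<^sub>R (\<gamma> j *s P)))
   = s *\<^sub>R ((\<alpha> - \<beta> - (\<Sum>j\<in>UNIV. complex_of_real (r j) * \<gamma> j)) *s P)"
  unfolding vec_eq_iff
  by (simp add: scaleR_vec_nth_complex vector_scalar_mult_def sum_distrib_left sum_distrib_right algebra_simps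
           del: vector_scaleR_component)

lemma sum_herglotz_dcoeff: "(\<Sum>j\<in>UNIV. complex_of_real (c $ j) * herglotz_dcoeff k j p) = \<i> * complex_of_real k * complex_of_real (c \<bullet> sph_point p)"
  unfolding herglotz_dcoeff_def inner_vec_def
  by (simp add: sum_distrib_left mult_ac)

lemma continuous_on_herglotz_dcoeff: "continuous_on UNIV (herglotz_dcoeff k j)"
  unfolding herglotz_dcoeff_def by (intro continuous_intros continuous_on_compose2[OF continuous_on_sph_point]) auto

lemma norm_herglotz_dcoeff_le: "k \<ge> 0 \<Longrightarrow> cmod (herglotz_dcoeff k j p) \<le> k"
proof -
  assume k: "k \<ge> 0"
  have "\<bar>sph_point p $ j\<bar> \<le> 1" using component_le_norm_cart[of "sph_point p" j] by (simp add: sph_point_def norm_sdir)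
  hence "k * \<bar>sph_point p $ j\<bar> \<le> k * 1" using k by (intro mult_left_mono) auto
  thus ?thesis unfolding herglotz_dcoeff_def using k by (simp add: norm_mult)
qed

lemma norm_iexp_taylor1_le: "cmod (iexp t - 1 - \<i> * complex_of_real t) \<le> t\<^sup>2 / 2"
  using iexp_approx1[of t 1] by (simp add: algebra_simps power2_eq_square)

lemma norm_plane_wave_remainder_le:
  assumes k: "k \<ge> 0"
  shows "cmod (plane_wave k y p - plane_wave k x p
      - (\<Sum>j\<in>UNIV. complex_of_real ((y - x) $ j) * (herglotz_dcoeff k j p * plane_wave k x p)))
    \<le> k\<^sup>2 * (norm (y - x))\<^sup>2 / 2"
proof -
  define t where "t = k * ((y - x) \<bullet> sph_point p)"
  have "(\<Sum>j\<in>UNIV. complex_of_real ((y - x) $ j) * (herglotz_dcoeff k j p * plane_wave k x p))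
      = \<i> * complex_of_real t * plane_wave k x p"
    unfolding t_def sum_distrib_right[symmetric] mult.assoc[symmetric] sum_herglotz_dcoeff by simp
  moreover have "plane_wave k y p = plane_wave k x p * iexp t"
    unfolding plane_wave_def t_def by (simp add: inner_diff_left algebra_simps exp_add[symmetric])
  ultimately have "plane_wave k y p - plane_wave k x p
      - (\<Sum>j\<in>UNIV. complex_of_real ((y - x) $ j) * (herglotz_dcoeff k j p * plane_wave k x p))
    = plane_wave k x p * (iexp t - 1 - \<i> * complex_of_real t)"
    by (simp add: algebra_simps)
  moreover have "cmod (plane_wave k x p) = 1" unfolding plane_wave_def by (rule norm_exp_i_times)
  ultimately have "cmod (plane_wave k y p - plane_wave k x p
      - (\<Sum>j\<in>UNIV. complex_of_real ((y - x) $ j) * (herglotz_dcoeff k j p * plane_wave k x p)))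
    = cmod (iexp t - 1 - \<i> * complex_of_real t)"
    by (simp add: norm_mult)
  also have "\<dots> \<le> t\<^sup>2 / 2" by (rule norm_iexp_taylor1_le)
  also have "\<dots> \<le> k\<^sup>2 * (norm (y - x))\<^sup>2 / 2"
  proof -
    have "\<bar>(y - x) \<bullet> sph_point p\<bar> \<le> norm (y - x)"
      using Cauchy_Schwarz_ineq2[of "y - x" "sph_point p"] by (simp add: sph_point_def norm_sdir)
    hence "\<bar>t\<bar> \<le> k * norm (y - x)" unfolding t_def using k by (simp add: abs_mult mult_left_mono)
    hence "t\<^sup>2 \<le> (k * norm (y - x))\<^sup>2" using power_mono[of "\<bar>t\<bar>" _ 2] by simp
    thus ?thesis by (simp add: power_mult_distrib)
  qed
  finally show ?thesis .
qed

lemma herglotz1_has_derivative: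
  assumes h: "L2t h" and k: "k \<ge> 0"
  shows "(herglotz1 k h has_derivative (\<lambda>v. \<Sum>j\<in>UNIV. (v $ j) *\<^sub>R herglotz_weighted k h (herglotz_dcoeff k j) x)) (at x)"
  unfolding herglotz1_eq_herglotz_weighted
proof (rule has_derivative_of_quadratic_remainder[where K = "k\<^sup>2 * integral\<^sup>L lebesgue (sph_weight h) / 2"])
  show "bounded_linear (\<lambda>v. \<Sum>j\<in>UNIV. (v $ j) *\<^sub>R herglotz_weighted k h (herglotz_dcoeff k j) x)"
    by (intro bounded_linear_sum bounded_linear_compose[OF bounded_linear_scaleR_left bounded_linear_vec_nth])
  fix y
  define I where "I z p = sin (fst p) *\<^sub>R ((1 * plane_wave k z p) *s sph_density h p)" for z p
  define J where "J j p = sin (fst p) *\<^sub>R ((herglotz_dcoeff k j p * plane_wave k x p) *s sph_density h p)" for j p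
  have iI: "integrable lebesgue (I z)" for z
    unfolding I_def by (rule integrable_herglotz_integrand[OF h, of _ 1]) simp_all
  have iJ: "integrable lebesgue (J j)" for j
    unfolding J_def
    by (rule integrable_herglotz_integrand[OF h continuous_on_herglotz_dcoeff norm_herglotz_dcoeff_le[OF k]])
  have "herglotz_weighted k h (\<lambda>_. 1) y - herglotz_weighted k h (\<lambda>_. 1) x
      - (\<Sum>j\<in>UNIV. (y - x) $ j *\<^sub>R herglotz_weighted k h (herglotz_dcoeff k j) x)
      = (\<integral>p. I y p - I x p - (\<Sum>j\<in>UNIV. (y - x) $ j *\<^sub>R J j p) \<partial>lebesgue)"
    using iI iJ unfolding herglotz_weighted_def I_def[symmetric] J_def[symmetric]
    by (simp add: Bochner_Integration.integral_diff Bochner_Integration.integral_sum)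
  also have "norm \<dots> \<le> (\<integral>p. (k\<^sup>2 * (norm (y - x))\<^sup>2 / 2) * sph_weight h p \<partial>lebesgue)"
  proof (rule Bochner_Integration.integral_norm_bound_integral)
    show "integrable lebesgue (\<lambda>p. I y p - I x p - (\<Sum>j\<in>UNIV. (y - x) $ j *\<^sub>R J j p))" using iI iJ by auto
    show "integrable lebesgue (\<lambda>p. (k\<^sup>2 * (norm (y - x))\<^sup>2 / 2) * sph_weight h p)"
      using integrable_sph_weight[OF h] by auto
    fix p
    have "norm (I y p - I x p - (\<Sum>j\<in>UNIV. (y - x) $ j *\<^sub>R J j p))
      = cmod (plane_wave k y p - plane_wave k x p
          - (\<Sum>j\<in>UNIV. complex_of_real ((y - x) $ j) * (herglotz_dcoeff k j p * plane_wave k x p)))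
        * sph_weight h p"
      unfolding I_def J_def scaleR_scalar_mult_combination norm_scaleR norm_scalar_mult_vec3
        abs_sin_mult_norm_sph_density[symmetric] by (simp add: mult_ac)
    also have "\<dots> \<le> k\<^sup>2 * (norm (y - x))\<^sup>2 / 2 * sph_weight h p"
      by (intro mult_right_mono norm_plane_wave_remainder_le k sph_weight_nonneg)
    finally show "norm (I y p - I x p - (\<Sum>j\<in>UNIV. (y - x) $ j *\<^sub>R J j p))
        \<le> k\<^sup>2 * (norm (y - x))\<^sup>2 / 2 * sph_weight h p" .
  qed
  also have "\<dots> = k\<^sup>2 * integral\<^sup>L lebesgue (sph_weight h) / 2 * (norm (y - x))\<^sup>2" by simp
  finally show "norm (herglotz_weighted k h (\<lambda>_. 1) y - herglotz_weighted k h (\<lambda>_. 1) x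
      - (\<Sum>j\<in>UNIV. (y - x) $ j *\<^sub>R herglotz_weighted k h (herglotz_dcoeff k j) x))
      \<le> k\<^sup>2 * integral\<^sup>L lebesgue (sph_weight h) / 2 * (norm (y - x))\<^sup>2" .
qed

lemma pd_herglotz1:
  assumes h: "L2t h" and k: "k \<ge> 0"
  shows "pd (herglotz1 k h) j = herglotz_weighted k h (herglotz_dcoeff k j)"
proof
  fix x
  have fd: "(\<lambda>v. \<Sum>i\<in>UNIV. (v $ i) *\<^sub>R herglotz_weighted k h (herglotz_dcoeff k i) x) = frechet_derivative (herglotz1 k h) (at x)"
    by (rule frechet_derivative_at[OF herglotz1_has_derivative[OF h k]])
  have s: "(\<Sum>i\<in>UNIV. (axis j (1::real) $ i) *\<^sub>R F i) = F j" for F :: "3 \<Rightarrow> C3"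
  proof -
    have "(axis j (1::real) $ i) *\<^sub>R F i = (if i = j then F i else 0)" for i by (simp add: axis_def)
    thus ?thesis by simp
  qed
  from fun_cong[OF fd, of "axis j 1"] show "pd (herglotz1 k h) j x = herglotz_weighted k h (herglotz_dcoeff k j) x"
    unfolding pd_def s by simp
qed

lemma continuous_on_herglotz1: "L2t h \<Longrightarrow> k \<ge> 0 \<Longrightarrow> continuous_on UNIV (herglotz1 k h)"
  unfolding herglotz1_eq_herglotz_weighted by (rule continuous_on_herglotz_weighted[where A=1]) auto

lemma continuous_on_ccurl_herglotz1: "L2t h \<Longrightarrow> k \<ge> 0 \<Longrightarrow> continuous_on UNIV (ccurl (herglotz1 k h))"
  by (intro continuous_on_ccurl, unfold pd_herglotz1)
    (rule continuous_on_herglotz_weighted[OF _ continuous_on_herglotz_dcoeff norm_herglotz_dcoeff_le])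

section \<open>Coercivity of the imaginary part of the middle operator\<close>

lemma set_lebesgue_integral_cnj: "(LINT x:D|M. cnj (F x)) = cnj (LINT x:D|M. F x)"
  unfolding set_lebesgue_integral_def
  using Bochner_Integration.integral_cnj[of M "\<lambda>x. indicator D x *\<^sub>R F x"] by simp

lemma Re_skew_part_ipX: "Re ((ipX D A B - ipX D B A) / (2 * \<i>)) = Im (ipX D A B)"
proof -
  have ip: "ip D F G = cnj (ip D G F)" for F G
    unfolding ip_def cdot_vcnj_commute[of "F _"] set_lebesgue_integral_cnj ..
  have "ipX D B A = cnj (ipX D A B)"
    unfolding ipX_def ip[of "fst B" "fst A"] ip[of "snd B" "snd A"] by simp
  thus ?thesis by (simp add: complex_diff_cnj)
qed

lemma set_integral_Im: "set_integrable M A F \<Longrightarrow> Im (LINT x:A|M. F x) = (LINT x:A|M. Im (F x))"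
  unfolding set_integrable_def set_lebesgue_integral_def
  using integral_bounded_linear[OF bounded_linear_Im, of M "\<lambda>x. indicator A x *\<^sub>R F x"] by simp

lemma set_integrable_Im: "set_integrable M A F \<Longrightarrow> set_integrable M A (\<lambda>x. Im (F x))"
  unfolding set_integrable_def using integrable_Im[of M "\<lambda>x. indicator A x *\<^sub>R F x"] by simp

lemma set_integral_nonneg: "(\<And>x. (F x::real) \<ge> 0) \<Longrightarrow> (LINT x:A|M. F x) \<ge> 0"
  unfolding set_lebesgue_integral_def by (intro integral_nonneg_AE) (auto simp: indicator_def)

lemma assumption_I_pointwise_coercive:
  assumes k: "k > 0" and AI: "assumption_I \<Omega> eps mu xi zeta"
  obtains \<kappa> where "\<kappa> > 0" and "AE x in lebesgue. x \<in> \<Omega> \<longrightarrow> (\<forall>f g u w.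
      \<kappa> * ((norm (u x + f x))\<^sup>2 + (norm (w x + g x))\<^sup>2)
      \<le> Im (cdot (T1 k eps mu xi zeta f g u w x) (vcnj (u x + f x))
            + cdot (T2 k eps mu xi zeta f g u w x) (vcnj (w x + g x))))"
proof -
  obtain c1 c2 \<alpha> \<beta> s t where pos: "c1 > 0" "c2 > 0" "\<alpha> > 0" "\<beta> > 0"
    and coer: "AE x in lebesgue. x \<in> \<Omega> \<longrightarrow> (\<forall>a::C3.
        Re (cdot (matrix_inv (mu x) *v a) (vcnj a)) \<ge> c1 * (norm a)\<^sup>2 \<and>
        Re (cdot ((eps x - xi x ** matrix_inv (mu x) ** zeta x) *v a) (vcnj a)) \<ge> c2 * (norm a)\<^sup>2 \<and>
        - Im (cdot (matrix_inv (mu x) *v a) (vcnj a)) \<ge> \<alpha> * (norm a)\<^sup>2 \<and>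
        Im (cdot ((eps x - xi x ** matrix_inv (mu x) ** zeta x) *v a) (vcnj a)) \<ge> \<beta> * (norm a)\<^sup>2)"
    and st: "s\<^sup>2 + t\<^sup>2 < 2 * min (c1 * c2) (\<alpha> * \<beta>)"
    and frob_le: "AE x in lebesgue. x \<in> \<Omega> \<longrightarrow>
        frob (matrix_inv (mu x) ** xi x) \<le> s \<and> frob (matrix_inv (mu x) ** zeta x) \<le> t"
    using AI unfolding assumption_I_def by (elim conjE exE) (rule that; assumption)
  have sym: "AE x in lebesgue. x \<in> \<Omega> \<longrightarrow> symmetric_mat (eps x) \<and> symmetric_mat (mu x) \<and>
      symmetric_mat (matrix_inv (mu x)) \<and> symmetric_mat (xi x) \<and> symmetric_mat (zeta x)"
    using AI unfolding assumption_I_def by (elim conjE) assumption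
  have "(\<bar>s\<bar> + \<bar>t\<bar>)\<^sup>2 \<le> 2 * (s\<^sup>2 + t\<^sup>2)"
    using power2_add_le_twice[of "\<bar>s\<bar>" "\<bar>t\<bar>"] by simp
  hence st': "((\<bar>s\<bar> + \<bar>t\<bar>) / 2)\<^sup>2 < \<alpha> * \<beta>" using st by (simp add: power_divide)
  define \<kappa> where "\<kappa> = coercivity_const \<alpha> \<beta> \<bar>s\<bar> \<bar>t\<bar> * min (k\<^sup>2) 1"
  show ?thesis
  proof (rule that)
    show "\<kappa> > 0" unfolding \<kappa>_def using coercivity_const_pos[OF pos(3,4) st'] k by simp
    show "AE x in lebesgue. x \<in> \<Omega> \<longrightarrow> (\<forall>f g u w.
      \<kappa> * ((norm (u x + f x))\<^sup>2 + (norm (w x + g x))\<^sup>2)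
      \<le> Im (cdot (T1 k eps mu xi zeta f g u w x) (vcnj (u x + f x))
            + cdot (T2 k eps mu xi zeta f g u w x) (vcnj (w x + g x))))"
      using coer frob_le sym
    proof eventually_elim
      case (elim x)
      show ?case
      proof (intro impI allI)
        fix f g u w assume "x \<in> \<Omega>"
        hence co: "\<forall>a::C3.
            Re (cdot (matrix_inv (mu x) *v a) (vcnj a)) \<ge> c1 * (norm a)\<^sup>2 \<and>
            Re (cdot ((eps x - xi x ** matrix_inv (mu x) ** zeta x) *v a) (vcnj a)) \<ge> c2 * (norm a)\<^sup>2 \<and>
            - Im (cdot (matrix_inv (mu x) *v a) (vcnj a)) \<ge> \<alpha> * (norm a)\<^sup>2 \<and>
            Im (cdot ((eps x - xi x ** matrix_inv (mu x) ** zeta x) *v a) (vcnj a)) \<ge> \<beta> * (norm a)\<^sup>2"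
          and fr: "frob (matrix_inv (mu x) ** xi x) \<le> s" "frob (matrix_inv (mu x) ** zeta x) \<le> t"
          and sy: "symmetric_mat (matrix_inv (mu x))" "symmetric_mat (xi x)"
          using elim by simp_all
        show "\<kappa> * ((norm (u x + f x))\<^sup>2 + (norm (w x + g x))\<^sup>2)
            \<le> Im (cdot (T1 k eps mu xi zeta f g u w x) (vcnj (u x + f x))
                + cdot (T2 k eps mu xi zeta f g u w x) (vcnj (w x + g x)))"
          unfolding \<kappa>_def T1_def T2_def Pm_def Qm_def
        proof (rule Im_middle_form_ge[OF k pos(3,4) st' _ _ sy(2,1)])
          show "norm (matrix_inv (mu x) ** xi x) \<le> \<bar>s\<bar>" "norm (matrix_inv (mu x) ** zeta x) \<le> \<bar>t\<bar>"
            using fr abs_ge_self[of s] abs_ge_self[of t] unfolding frob_eq_norm by linarith+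
          show "- Im (cdot (matrix_inv (mu x) *v (w x + g x)) (vcnj (w x + g x))) \<ge> \<alpha> * (norm (w x + g x))\<^sup>2"
            using co by blast
          show "Im (cdot ((eps x - xi x ** matrix_inv (mu x) ** zeta x) *v (u x + f x)) (vcnj (u x + f x)))
              \<ge> \<beta> * (norm (u x + f x))\<^sup>2"
            using co by blast
        qed
      qed
    qed
  qed
qed

lemma L2on_middle_operator:
  assumes AI: "assumption_I \<Omega> eps mu xi zeta" and \<Omega>: "\<Omega> \<in> sets lebesgue"
    and a: "L2on \<Omega> (\<lambda>x. u x + f x)" and b: "L2on \<Omega> (\<lambda>x. w x + g x)"
  shows "L2on \<Omega> (T1 k eps mu xi zeta f g u w)" "L2on \<Omega> (T2 k eps mu xi zeta f g u w)"
proof -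
  have Leps: "Linf_on \<Omega> eps" and Lminv: "Linf_on \<Omega> (\<lambda>x. matrix_inv (mu x))"
    and Lxi: "Linf_on \<Omega> xi" and Lzeta: "Linf_on \<Omega> zeta"
    using AI by (simp_all add: assumption_I_def)
  have LI: "Linf_on \<Omega> (\<lambda>x. mat 1 :: M3)" by (rule Linf_on_const[OF \<Omega>])
  show "L2on \<Omega> (T1 k eps mu xi zeta f g u w)" unfolding T1_def[abs_def] Pm_def
    by (intro L2on_diff L2on_scalar_mult L2on_Linf_on_mult[OF a] L2on_Linf_on_mult[OF b]
        Linf_on_diff Linf_on_mult Leps LI Lxi Lminv Lzeta)
  show "L2on \<Omega> (T2 k eps mu xi zeta f g u w)" unfolding T2_def[abs_def] Qm_def
    by (intro L2on_add L2on_scalar_mult L2on_Linf_on_mult[OF a] L2on_Linf_on_mult[OF b]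
        Linf_on_diff Linf_on_mult LI Lxi Lminv Lzeta)
qed

lemma le_of_sqrt_le_weighted_sum:
  fixes a b c C1 C2 :: real
  assumes a: "a \<ge> 0" and b: "b \<ge> 0" and c: "c \<ge> 0" and le: "sqrt c \<le> C1 * sqrt a + C2 * sqrt b"
  shows "c \<le> 2 * max (C1\<^sup>2) (C2\<^sup>2) * (a + b)"
proof -
  have "c = (sqrt c)\<^sup>2" using c by simp
  also have "\<dots> \<le> (C1 * sqrt a + C2 * sqrt b)\<^sup>2" using le c by (intro power_mono) auto
  also have "\<dots> \<le> 2 * C1\<^sup>2 * a + 2 * C2\<^sup>2 * b"
    using power2_add_le_twice[of "C1 * sqrt a" "C2 * sqrt b"] a b by (simp add: power_mult_distrib)
  also have "\<dots> \<le> 2 * max (C1\<^sup>2) (C2\<^sup>2) * (a + b)"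
    using a b by (simp add: distrib_left add_mono mult_right_mono)
  finally show ?thesis .
qed

text \<open>The a priori estimate bounds the scattered field by the total field, and \<open>(f, g)\<close> is their
  difference.\<close>

lemma normX_data_le_total_field:
  assumes L2: "L2on \<Omega> f" "L2on \<Omega> g" "L2on \<Omega> u" "L2on \<Omega> w"
    and est: "normX \<Omega> u w \<le> C1 * L2norm \<Omega> (\<lambda>x. f x + u x) + C2 * L2norm \<Omega> (\<lambda>x. g x + w x)"
  shows "(normX \<Omega> f g)\<^sup>2
    \<le> (2 + 4 * max (C1\<^sup>2) (C2\<^sup>2)) * (LINT x:\<Omega>|lebesgue. (norm (u x + f x))\<^sup>2 + (norm (w x + g x))\<^sup>2)"
proof -
  define Ia where "Ia = (LINT x:\<Omega>|lebesgue. (norm (u x + f x))\<^sup>2)"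
  define Ib where "Ib = (LINT x:\<Omega>|lebesgue. (norm (w x + g x))\<^sup>2)"
  define Iu where "Iu = (LINT x:\<Omega>|lebesgue. (norm (u x))\<^sup>2 + (norm (w x))\<^sup>2)"
  define Cm where "Cm = max (C1\<^sup>2) (C2\<^sup>2)"
  have ia: "set_integrable lebesgue \<Omega> (\<lambda>x. (norm (u x + f x))\<^sup>2)"
    and ib: "set_integrable lebesgue \<Omega> (\<lambda>x. (norm (w x + g x))\<^sup>2)"
    and iu: "set_integrable lebesgue \<Omega> (\<lambda>x. (norm (u x))\<^sup>2 + (norm (w x))\<^sup>2)"
    and ifg: "set_integrable lebesgue \<Omega> (\<lambda>x. (norm (f x))\<^sup>2 + (norm (g x))\<^sup>2)"
    using set_integrable_norm_power2[OF L2on_add[OF L2(3,1)]] set_integrable_norm_power2[OF L2on_add[OF L2(4,2)]]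
      set_integral_add(1)[OF set_integrable_norm_power2[OF L2(3)] set_integrable_norm_power2[OF L2(4)]]
      set_integral_add(1)[OF set_integrable_norm_power2[OF L2(1)] set_integrable_norm_power2[OF L2(2)]]
    by simp_all
  have S: "(LINT x:\<Omega>|lebesgue. (norm (u x + f x))\<^sup>2 + (norm (w x + g x))\<^sup>2) = Ia + Ib"
    unfolding Ia_def Ib_def by (rule set_integral_add(2)[OF ia ib])
  have Ia0: "Ia \<ge> 0" and Ib0: "Ib \<ge> 0" and Iu0: "Iu \<ge> 0"
    unfolding Ia_def Ib_def Iu_def by (simp_all add: set_integral_nonneg)
  have "sqrt Iu \<le> C1 * sqrt Ia + C2 * sqrt Ib"
    using est unfolding normX_def L2norm_def Ia_def Ib_def Iu_def by (simp add: add.commute)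
  hence Iu_le: "Iu \<le> 2 * Cm * (Ia + Ib)"
    unfolding Cm_def by (rule le_of_sqrt_le_weighted_sum[OF Ia0 Ib0 Iu0])
  have i2S: "set_integrable lebesgue \<Omega> (\<lambda>x. 2 * ((norm (u x + f x))\<^sup>2 + (norm (w x + g x))\<^sup>2))"
    using ia ib by (intro set_integrable_mult_right set_integral_add(1))
  have i2U: "set_integrable lebesgue \<Omega> (\<lambda>x. 2 * ((norm (u x))\<^sup>2 + (norm (w x))\<^sup>2))"
    using iu by (rule set_integrable_mult_right)
  have "(normX \<Omega> f g)\<^sup>2 = (LINT x:\<Omega>|lebesgue. (norm (f x))\<^sup>2 + (norm (g x))\<^sup>2)"
    unfolding normX_def using set_integral_nonneg[of "\<lambda>x. (norm (f x))\<^sup>2 + (norm (g x))\<^sup>2"] by simp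
  also have "\<dots> \<le> (LINT x:\<Omega>|lebesgue. 2 * ((norm (u x + f x))\<^sup>2 + (norm (w x + g x))\<^sup>2)
                                     + 2 * ((norm (u x))\<^sup>2 + (norm (w x))\<^sup>2))"
  proof (rule set_integral_mono[OF ifg])
    show "set_integrable lebesgue \<Omega> (\<lambda>x. 2 * ((norm (u x + f x))\<^sup>2 + (norm (w x + g x))\<^sup>2)
                                     + 2 * ((norm (u x))\<^sup>2 + (norm (w x))\<^sup>2))"
      by (rule set_integral_add(1)[OF i2S i2U])
    fix x
    have "(norm (f x))\<^sup>2 \<le> 2 * (norm (u x + f x))\<^sup>2 + 2 * (norm (u x))\<^sup>2"
      "(norm (g x))\<^sup>2 \<le> 2 * (norm (w x + g x))\<^sup>2 + 2 * (norm (w x))\<^sup>2"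
      using power2_norm_diff_le[of "u x + f x" "u x"] power2_norm_diff_le[of "w x + g x" "w x"] by simp_all
    thus "(norm (f x))\<^sup>2 + (norm (g x))\<^sup>2 \<le> 2 * ((norm (u x + f x))\<^sup>2 + (norm (w x + g x))\<^sup>2)
                                     + 2 * ((norm (u x))\<^sup>2 + (norm (w x))\<^sup>2)" by simp
  qed
  also have "\<dots> = (LINT x:\<Omega>|lebesgue. 2 * ((norm (u x + f x))\<^sup>2 + (norm (w x + g x))\<^sup>2))
                 + (LINT x:\<Omega>|lebesgue. 2 * ((norm (u x))\<^sup>2 + (norm (w x))\<^sup>2))"
    by (rule set_integral_add(2)[OF i2S i2U])
  also have "\<dots> = 2 * (Ia + Ib) + 2 * Iu" unfolding set_integral_mult_right S Iu_def ..
  also have "\<dots> \<le> (2 + 4 * Cm) * (Ia + Ib)" using Iu_le by (simp add: algebra_simps)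
  finally show ?thesis unfolding S Cm_def .
qed

lemma ipX_eq_pairing_diff:
  assumes "L2on \<Omega> T" "L2on \<Omega> T'" "L2on \<Omega> f" "L2on \<Omega> g" "L2on \<Omega> u" "L2on \<Omega> w"
  shows "ipX \<Omega> (T, T') (f, g)
    = (LINT x:\<Omega>|lebesgue. cdot (T x) (vcnj (u x + f x)) + cdot (T' x) (vcnj (w x + g x)))
      - (LINT x:\<Omega>|lebesgue. cdot (T x) (vcnj (u x)) + cdot (T' x) (vcnj (w x)))"
proof -
  have i: "set_integrable lebesgue \<Omega> (\<lambda>x. cdot (T x) (vcnj (f x)))"
    "set_integrable lebesgue \<Omega> (\<lambda>x. cdot (T' x) (vcnj (g x)))"
    "set_integrable lebesgue \<Omega> (\<lambda>x. cdot (T x) (vcnj (u x)))"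
    "set_integrable lebesgue \<Omega> (\<lambda>x. cdot (T' x) (vcnj (w x)))"
    using assms by (auto intro: set_integrable_cdot_vcnj)
  have "cdot (T x) (vcnj (u x + f x)) + cdot (T' x) (vcnj (w x + g x))
      = (cdot (T x) (vcnj (f x)) + cdot (T' x) (vcnj (g x))) + (cdot (T x) (vcnj (u x)) + cdot (T' x) (vcnj (w x)))"
    for x by (simp add: vcnj_add cdot_add_right)
  hence "(LINT x:\<Omega>|lebesgue. cdot (T x) (vcnj (u x + f x)) + cdot (T' x) (vcnj (w x + g x)))
      = (LINT x:\<Omega>|lebesgue. cdot (T x) (vcnj (f x)) + cdot (T' x) (vcnj (g x)))
        + (LINT x:\<Omega>|lebesgue. cdot (T x) (vcnj (u x)) + cdot (T' x) (vcnj (w x)))"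
    by (simp add: set_integral_add(2)[OF set_integral_add(1)[OF i(1,2)] set_integral_add(1)[OF i(3,4)]])
  moreover have "ipX \<Omega> (T, T') (f, g) = (LINT x:\<Omega>|lebesgue. cdot (T x) (vcnj (f x)) + cdot (T' x) (vcnj (g x)))"
    unfolding ipX_def ip_def by (simp add: set_integral_add(2)[OF i(1,2)])
  ultimately show ?thesis by simp
qed

lemma Im_pairing_ge_if_AE:
  assumes bound: "AE x in lebesgue. x \<in> \<Omega> \<longrightarrow>
      c * ((norm (a x))\<^sup>2 + (norm (b x))\<^sup>2) \<le> Im (cdot (T x) (vcnj (a x)) + cdot (T' x) (vcnj (b x)))"
    and L2: "L2on \<Omega> T" "L2on \<Omega> T'" "L2on \<Omega> a" "L2on \<Omega> b"
  shows "c * (LINT x:\<Omega>|lebesgue. (norm (a x))\<^sup>2 + (norm (b x))\<^sup>2)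
    \<le> Im (LINT x:\<Omega>|lebesgue. cdot (T x) (vcnj (a x)) + cdot (T' x) (vcnj (b x)))"
proof -
  have iT: "set_integrable lebesgue \<Omega> (\<lambda>x. cdot (T x) (vcnj (a x)) + cdot (T' x) (vcnj (b x)))"
    using L2 by (intro set_integral_add set_integrable_cdot_vcnj)
  have iN: "set_integrable lebesgue \<Omega> (\<lambda>x. (norm (a x))\<^sup>2 + (norm (b x))\<^sup>2)"
    using L2 by (intro set_integral_add set_integrable_norm_power2)
  have "c * (LINT x:\<Omega>|lebesgue. (norm (a x))\<^sup>2 + (norm (b x))\<^sup>2)
      = (LINT x:\<Omega>|lebesgue. c * ((norm (a x))\<^sup>2 + (norm (b x))\<^sup>2))"
    by (rule set_integral_mult_right[symmetric])
  also have "\<dots> \<le> (LINT x:\<Omega>|lebesgue. Im (cdot (T x) (vcnj (a x)) + cdot (T' x) (vcnj (b x))))"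
    using bound by (intro set_integral_mono_AE set_integrable_mult_right iN set_integrable_Im[OF iT])
      (simp add: set_integrable_mult_right iN)
  also have "\<dots> = Im (LINT x:\<Omega>|lebesgue. cdot (T x) (vcnj (a x)) + cdot (T' x) (vcnj (b x)))"
    by (rule set_integral_Im[OF iT, symmetric])
  finally show ?thesis .
qed

theorem Im_middle_operator_coercive:
  fixes k :: real and \<Omega> :: "R3 set"
  assumes k: "k > 0" and bdd: "bounded \<Omega>" and \<Omega>: "\<Omega> \<in> sets lebesgue"
    and AI: "assumption_I \<Omega> eps mu xi zeta"
    and est: "\<And>f g u w. L2on \<Omega> f \<Longrightarrow> L2on \<Omega> g \<Longrightarrow> solves k \<Omega> eps mu xi zeta f g u w
      \<Longrightarrow> normX \<Omega> u w \<le> C1 * L2norm \<Omega> (\<lambda>x. f x + u x) + C2 * L2norm \<Omega> (\<lambda>x. g x + w x)"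
  obtains \<gamma> where "\<gamma> > 0"
    and "\<And>f g u w. L2on \<Omega> f \<Longrightarrow> L2on \<Omega> g \<Longrightarrow> solves k \<Omega> eps mu xi zeta f g u w \<Longrightarrow>
      \<gamma> * (normX \<Omega> f g)\<^sup>2
      \<le> Im (ipX \<Omega> (T1 k eps mu xi zeta f g u w, T2 k eps mu xi zeta f g u w) (f, g))"
proof -
  obtain \<kappa> where \<kappa>: "\<kappa> > 0" and pointwise: "AE x in lebesgue. x \<in> \<Omega> \<longrightarrow> (\<forall>f g u w.
      \<kappa> * ((norm (u x + f x))\<^sup>2 + (norm (w x + g x))\<^sup>2)
      \<le> Im (cdot (T1 k eps mu xi zeta f g u w x) (vcnj (u x + f x))
            + cdot (T2 k eps mu xi zeta f g u w x) (vcnj (w x + g x))))"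
    using assumption_I_pointwise_coercive[OF k AI] by blast
  obtain r0 where \<Omega>r: "\<Omega> \<subseteq> ball 0 r0" using bdd bounded_subset_ballD by blast
  define \<gamma> where "\<gamma> = \<kappa> / (2 + 4 * max (C1\<^sup>2) (C2\<^sup>2))"
  have denom: "2 + 4 * max (C1\<^sup>2) (C2\<^sup>2) > 0"
    using zero_le_power2[of C1] max.cobounded1[of "C1\<^sup>2" "C2\<^sup>2"] by linarith
  show ?thesis
  proof (rule that)
    show "\<gamma> > 0" unfolding \<gamma>_def using \<kappa> denom by simp
    fix f g u w
    assume f: "L2on \<Omega> f" and g: "L2on \<Omega> g" and sol: "solves k \<Omega> eps mu xi zeta f g u w"
    define S where "S = (LINT x:\<Omega>|lebesgue. (norm (u x + f x))\<^sup>2 + (norm (w x + g x))\<^sup>2)"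
    have "L2loc u" "L2loc w" using sol unfolding solves_def Hloc_curl_def by blast+
    hence u: "L2on \<Omega> u" and w: "L2on \<Omega> w"
      using \<Omega>r \<Omega> unfolding L2loc_def by (blast intro: L2on_subset)+
    have a: "L2on \<Omega> (\<lambda>x. u x + f x)" and b: "L2on \<Omega> (\<lambda>x. w x + g x)"
      using L2on_add u w f g by blast+
    note T = L2on_middle_operator[OF AI \<Omega> a b, of k]
    have "AE x in lebesgue. x \<in> \<Omega> \<longrightarrow> \<kappa> * ((norm (u x + f x))\<^sup>2 + (norm (w x + g x))\<^sup>2)
        \<le> Im (cdot (T1 k eps mu xi zeta f g u w x) (vcnj (u x + f x))
              + cdot (T2 k eps mu xi zeta f g u w x) (vcnj (w x + g x)))"
      using pointwise by eventually_elim blast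
    hence "\<kappa> * S \<le> Im (LINT x:\<Omega>|lebesgue. cdot (T1 k eps mu xi zeta f g u w x) (vcnj (u x + f x))
                                       + cdot (T2 k eps mu xi zeta f g u w x) (vcnj (w x + g x)))"
      unfolding S_def by (rule Im_pairing_ge_if_AE[OF _ T a b])
    moreover have "Im (LINT x:\<Omega>|lebesgue. cdot (T1 k eps mu xi zeta f g u w x) (vcnj (u x))
                                       + cdot (T2 k eps mu xi zeta f g u w x) (vcnj (w x))) \<le> 0"
      by (rule Im_pairing_with_solution_nonpos[OF k \<Omega>r \<Omega> sol])
    ultimately have lower: "\<kappa> * S \<le> Im (ipX \<Omega> (T1 k eps mu xi zeta f g u w, T2 k eps mu xi zeta f g u w) (f, g))"
      unfolding ipX_eq_pairing_diff[OF T f g u w] by simp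
    have "(normX \<Omega> f g)\<^sup>2 \<le> (2 + 4 * max (C1\<^sup>2) (C2\<^sup>2)) * S"
      unfolding S_def by (rule normX_data_le_total_field[OF f g u w est[OF f g sol]])
    hence "\<gamma> * (normX \<Omega> f g)\<^sup>2 \<le> \<gamma> * ((2 + 4 * max (C1\<^sup>2) (C2\<^sup>2)) * S)"
      unfolding \<gamma>_def using \<kappa> denom by (intro mult_left_mono) auto
    also have "\<dots> = \<kappa> * S" unfolding \<gamma>_def using denom by simp
    finally show "\<gamma> * (normX \<Omega> f g)\<^sup>2
      \<le> Im (ipX \<Omega> (T1 k eps mu xi zeta f g u w, T2 k eps mu xi zeta f g u w) (f, g))"
      using lower by linarith
  qed
qed

theorem mainTheorem3:
  fixes k :: real and \<Omega> :: "(real^3) set"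
    and eps mu xi zeta :: "real^3 \<Rightarrow> complex^3^3"
  assumes k_pos: "k > 0"
    and dom: "lipschitz_domain \<Omega>" and bdd: "bounded \<Omega>"
    and ext_conn: "connected (- closure \<Omega>)"
    and outside: "\<forall>x. x \<notin> closure \<Omega> \<longrightarrow> eps x = mat 1 \<and> mu x = mat 1 \<and> xi x = 0 \<and> zeta x = 0"
    and AI: "assumption_I \<Omega> eps mu xi zeta"
    and known_exists: "\<forall>f g. L2on \<Omega> f \<and> L2on \<Omega> g \<longrightarrow> (\<exists>u w. solves k \<Omega> eps mu xi zeta f g u w)"
    and known_unique: "\<forall>f g u w u' w'. L2on \<Omega> f \<and> L2on \<Omega> g \<and> solves k \<Omega> eps mu xi zeta f g u w
                         \<and> solves k \<Omega> eps mu xi zeta f g u' w' \<longrightarrow> (AE x in lebesgue. u x = u' x)"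
    and known_bound: "\<exists>c. \<forall>f g u w. L2on \<Omega> f \<and> L2on \<Omega> g \<and> solves k \<Omega> eps mu xi zeta f g u w
                         \<longrightarrow> normX \<Omega> u w \<le> c * normX \<Omega> f g"
    and known_est: "\<exists>C1 C2. C1 > 0 \<and> C2 > 0 \<and> (\<forall>f g u w. L2on \<Omega> f \<and> L2on \<Omega> g \<and> solves k \<Omega> eps mu xi zeta f g u w
                         \<longrightarrow> normX \<Omega> u w \<le> C1 * L2norm \<Omega> (\<lambda>x. f x + u x) + C2 * L2norm \<Omega> (\<lambda>x. g x + w x))"
  shows "\<exists>\<gamma>>0. \<forall>h u w. L2t h \<and>
           solves k \<Omega> eps mu xi zeta (herglotz1 k h) (ccurl (herglotz1 k h)) u w \<longrightarrow>
           (let f = herglotz1 k h; g = ccurl (herglotz1 k h);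
                TT = (T1 k eps mu xi zeta f g u w, T2 k eps mu xi zeta f g u w)
            in Re ((ipX \<Omega> TT (f, g) - ipX \<Omega> (f, g) TT) / (2 * \<i>)) \<ge> \<gamma> * (normX \<Omega> f g)^2)"
proof -
  have \<Omega>: "\<Omega> \<in> sets lebesgue"
    using dom bdd unfolding lipschitz_domain_def by (blast intro: fmeasurableD lmeasurable_open)
  obtain C1 C2 where est: "\<And>f g u w. L2on \<Omega> f \<Longrightarrow> L2on \<Omega> g \<Longrightarrow> solves k \<Omega> eps mu xi zeta f g u w
      \<Longrightarrow> normX \<Omega> u w \<le> C1 * L2norm \<Omega> (\<lambda>x. f x + u x) + C2 * L2norm \<Omega> (\<lambda>x. g x + w x)"
    using known_est by blast
  obtain \<gamma> where "\<gamma> > 0" and coercive: "\<And>f g u w. L2on \<Omega> f \<Longrightarrow> L2on \<Omega> g \<Longrightarrow>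
      solves k \<Omega> eps mu xi zeta f g u w \<Longrightarrow>
      \<gamma> * (normX \<Omega> f g)\<^sup>2 \<le> Im (ipX \<Omega> (T1 k eps mu xi zeta f g u w, T2 k eps mu xi zeta f g u w) (f, g))"
    using Im_middle_operator_coercive[OF k_pos bdd \<Omega> AI est] by blast
  have "L2on \<Omega> (herglotz1 k h)" "L2on \<Omega> (ccurl (herglotz1 k h))" if "L2t h" for h
    using k_pos that bdd \<Omega>
    by (auto intro!: L2on_continuous continuous_on_herglotz1 continuous_on_ccurl_herglotz1)
  thus ?thesis using \<open>\<gamma> > 0\<close> coercive unfolding Let_def Re_skew_part_ipX by blast
qed

end
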